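(* Let $M/K$ be obtained by strong cluster magnification from a subextension $L/K$ with magnification factor $d$. Then $t_K(M)=d\,t_K(L)$ and $u_K(M)=u_K(L)$.
   Context: $K$ is a perfect field with a fixed algebraic closure $\bar K$; all extensions finite inside $\bar K$; $\tilde L$ is the Galois closure of $L/K$. Strong cluster magnification: $M/K$ is obtained by strong cluster magnification from $L/K$ ($K\subseteq L\subseteq M$) if $[L:K]>2$ and there is a finite Galois $F/K$ with $\tilde L$ and $F$ linearly disjoint over $K$ and $LF=M$; $d=[F:K]$ is the magnification factor. For a finite extension $P/K$, let $F_P$ be the unique subfield of $P$ Galois over $K$ of maximum possible degree; the ascending index is $t_K(P)=[F_P:K]$ and $u_K(P)=[P:F_P]$. *)

theory Defs
  imports "HOL-Computational_Algebra.Polynomial"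
begin

text \<open>All fields are subfields of an ambient field of type 'a (playing the role of the
  algebraic closure of K).\<close>

definition is_subfield :: "'a::field set \<Rightarrow> bool" where
  "is_subfield S \<longleftrightarrow> 0 \<in> S \<and> 1 \<in> S \<and>
     (\<forall>x\<in>S. \<forall>y\<in>S. x + y \<in> S \<and> x * y \<in> S) \<and>
     (\<forall>x\<in>S. - x \<in> S) \<and> (\<forall>x\<in>S. x \<noteq> 0 \<longrightarrow> inverse x \<in> S)"

definition lin_indep_over :: "'a::field set \<Rightarrow> 'a set \<Rightarrow> bool" where
  "lin_indep_over B S \<longleftrightarrow>
     (\<forall>c. (\<forall>s\<in>S. c s \<in> B) \<and> (\<Sum>s\<in>S. c s * s) = 0 \<longrightarrow> (\<forall>s\<in>S. c s = 0))"

definition span_over :: "'a::field set \<Rightarrow> 'a set \<Rightarrow> 'a set" where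
  "span_over B S = {\<Sum>s\<in>S. c s * s | c. \<forall>s\<in>S. c s \<in> B}"

definition is_basis :: "'a::field set \<Rightarrow> 'a set \<Rightarrow> 'a set \<Rightarrow> bool" where
  "is_basis K L B \<longleftrightarrow> finite B \<and> B \<subseteq> L \<and> lin_indep_over K B \<and> span_over K B = L"

definition finite_ext :: "'a::field set \<Rightarrow> 'a set \<Rightarrow> bool" where
  "finite_ext K L \<longleftrightarrow> is_subfield K \<and> is_subfield L \<and> K \<subseteq> L \<and> (\<exists>B. is_basis K L B)"

definition ext_degree :: "'a::field set \<Rightarrow> 'a set \<Rightarrow> nat" where
  "ext_degree K L = (if \<exists>B. is_basis K L B then card (SOME B. is_basis K L B) else 0)"

text \<open>K-automorphisms of L (normalised to be the identity outside L).\<close>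
definition K_auts :: "'a::field set \<Rightarrow> 'a set \<Rightarrow> ('a \<Rightarrow> 'a) set" where
  "K_auts K L = {\<sigma>. bij_betw \<sigma> L L \<and>
      (\<forall>x\<in>L. \<forall>y\<in>L. \<sigma> (x + y) = \<sigma> x + \<sigma> y \<and> \<sigma> (x * y) = \<sigma> x * \<sigma> y) \<and>
      (\<forall>x\<in>K. \<sigma> x = x) \<and> (\<forall>x. x \<notin> L \<longrightarrow> \<sigma> x = x)}"

definition galois :: "'a::field set \<Rightarrow> 'a set \<Rightarrow> bool" where
  "galois K L \<longleftrightarrow> finite_ext K L \<and> card (K_auts K L) = ext_degree K L"

definition galois_closure :: "'a::field set \<Rightarrow> 'a set \<Rightarrow> 'a set" where
  "galois_closure K L = \<Inter>{F. galois K F \<and> L \<subseteq> F}"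

definition compositum :: "'a::field set \<Rightarrow> 'a set \<Rightarrow> 'a set" where
  "compositum A B = \<Inter>{S. is_subfield S \<and> A \<union> B \<subseteq> S}"

definition lin_disjoint :: "'a::field set \<Rightarrow> 'a set \<Rightarrow> 'a set \<Rightarrow> bool" where
  "lin_disjoint K A B \<longleftrightarrow>
     (\<forall>S. finite S \<and> S \<subseteq> A \<and> lin_indep_over K S \<longrightarrow> lin_indep_over B S)"

definition is_alg_closure_of :: "'a::field set \<Rightarrow> bool" where
  "is_alg_closure_of K \<longleftrightarrow> is_subfield K \<and>
     (\<forall>p::'a poly. degree p > 0 \<longrightarrow> (\<exists>x. poly p x = 0)) \<and>
     (\<forall>x::'a. \<exists>p. p \<noteq> 0 \<and> (\<forall>i. coeff p i \<in> K) \<and> poly p x = 0)"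

definition perfect_field :: "'a::field set \<Rightarrow> bool" where
  "perfect_field K \<longleftrightarrow> is_subfield K \<and>
     (CHAR('a) = 0 \<or> (\<forall>x\<in>K. \<exists>y\<in>K. y ^ CHAR('a) = x))"

definition max_galois_sub :: "'a::field set \<Rightarrow> 'a set \<Rightarrow> 'a set" where
  "max_galois_sub K P = (THE F. galois K F \<and> F \<subseteq> P \<and>
      (\<forall>G. galois K G \<and> G \<subseteq> P \<longrightarrow> ext_degree K G \<le> ext_degree K F))"

definition asc_t :: "'a::field set \<Rightarrow> 'a set \<Rightarrow> nat" where
  "asc_t K P = ext_degree K (max_galois_sub K P)"

definition asc_u :: "'a::field set \<Rightarrow> 'a set \<Rightarrow> nat" where
  "asc_u K P = ext_degree (max_galois_sub K P) P"

definition strong_cluster_magnification ::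
  "'a::field set \<Rightarrow> 'a set \<Rightarrow> 'a set \<Rightarrow> nat \<Rightarrow> bool" where
  "strong_cluster_magnification K L M d \<longleftrightarrow>
     finite_ext K L \<and> L \<subseteq> M \<and> ext_degree K L > 2 \<and>
     (\<exists>F. galois K F \<and> lin_disjoint K (galois_closure K L) F \<and>
          compositum L F = M \<and> d = ext_degree K F)"

end

theory Submission
  imports Defs
begin

text \<open>Write \<open>F\<^sub>P\<close> for the largest Galois subextension of \<open>P\<close> and \<open>N\<close> for the Galois
  closure of \<open>L\<close>. Linear disjointness of \<open>N\<close> and \<open>F\<close> makes a \<open>K\<close>-basis of \<open>F\<close> a basis
  of \<open>M = LF\<close> over \<open>L\<close>, and lets every \<open>K\<close>-automorphism of \<open>N\<close> extend to \<open>NF\<close> fixing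
  \<open>F\<close> pointwise. For a Galois \<open>G \<subseteq> M\<close> and \<open>x \<in> G\<close>, these extensions map \<open>x\<close> into
  \<open>G \<subseteq> M\<close>; comparing coefficients shows that the coefficients of \<open>x\<close> lie in the largest
  subfield of \<open>L\<close> stable under \<open>Aut(N/K)\<close>. That subfield is normal, hence Galois, hence
  contained in \<open>F\<^sub>L\<close>. Thus \<open>F\<^sub>M = F\<^sub>L F\<close>, whose degree is \<open>d [F\<^sub>L:K]\<close> by linear
  disjointness, and the tower law gives \<open>[M:F\<^sub>M] = [L:F\<^sub>L]\<close>.

  Inside an algebraic closure of a perfect field, ``Galois'' in the sense \<open>|Aut(E/K)| = [E:K]\<close>
  is equivalent to normality (every \<open>K\<close>-embedding maps \<open>E\<close> into itself); this is what makes
  Galois subextensions closed under composita and intersections.\<close>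

section \<open>Subfields\<close>

lemma subfield_0: "is_subfield K \<Longrightarrow> 0 \<in> K" by (simp add: is_subfield_def)
lemma subfield_1: "is_subfield K \<Longrightarrow> 1 \<in> K" by (simp add: is_subfield_def)
lemma subfield_add: "is_subfield K \<Longrightarrow> x \<in> K \<Longrightarrow> y \<in> K \<Longrightarrow> x + y \<in> K" by (simp add: is_subfield_def)
lemma subfield_mult: "is_subfield K \<Longrightarrow> x \<in> K \<Longrightarrow> y \<in> K \<Longrightarrow> x * y \<in> K" by (simp add: is_subfield_def)
lemma subfield_uminus: "is_subfield K \<Longrightarrow> x \<in> K \<Longrightarrow> - x \<in> K" by (simp add: is_subfield_def)
lemma subfield_inverse: "is_subfield K \<Longrightarrow> x \<in> K \<Longrightarrow> inverse x \<in> K"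
  by (cases "x = 0") (auto simp add: is_subfield_def)
lemma subfield_diff: "is_subfield K \<Longrightarrow> x \<in> K \<Longrightarrow> y \<in> K \<Longrightarrow> x - y \<in> K"
  using subfield_add[of K x "-y"] subfield_uminus[of K y] by simp
lemma subfield_divide: "is_subfield K \<Longrightarrow> x \<in> K \<Longrightarrow> y \<in> K \<Longrightarrow> x / y \<in> K"
  using subfield_mult[of K x "inverse y"] subfield_inverse[of K y] by (simp add: divide_inverse)
lemma subfield_sum: "is_subfield K \<Longrightarrow> (\<And>i. i \<in> A \<Longrightarrow> f i \<in> K) \<Longrightarrow> sum f A \<in> K"
  by (induction A rule: infinite_finite_induct) (auto simp: subfield_0 subfield_add)
lemma subfield_of_nat: "is_subfield K \<Longrightarrow> of_nat n \<in> K"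
  by (induction n) (auto simp: subfield_0 subfield_1 subfield_add)
lemma subfield_UNIV: "is_subfield UNIV" by (simp add: is_subfield_def)
lemma subfield_Int: "is_subfield A \<Longrightarrow> is_subfield B \<Longrightarrow> is_subfield (A \<inter> B)"
  by (simp add: is_subfield_def)
lemma subfield_Int_INT:
  "is_subfield L \<Longrightarrow> (\<And>i. i \<in> I \<Longrightarrow> is_subfield (S i)) \<Longrightarrow> is_subfield (L \<inter> (\<Inter>i\<in>I. S i))"
  unfolding is_subfield_def by auto

section \<open>Linear algebra over a subfield\<close>

lemma homogeneous_system_solvable:
  fixes a :: "'j \<Rightarrow> 'i \<Rightarrow> 'a::field"
  assumes E: "is_subfield E" and "finite J" "finite I" "card J < card I"
    and "\<forall>j\<in>J. \<forall>i\<in>I. a j i \<in> E"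
  shows "\<exists>x. (\<forall>i\<in>I. x i \<in> E) \<and> (\<exists>i\<in>I. x i \<noteq> 0) \<and> (\<forall>j\<in>J. (\<Sum>i\<in>I. a j i * x i) = 0)"
  using assms(2-)
proof (induction J arbitrary: I a rule: finite_induct)
  case empty
  then obtain i0 where "i0 \<in> I" by fastforce
  then show ?case
    by (intro exI[of _ "\<lambda>i. if i = i0 then 1 else 0"]) (auto simp: subfield_0 subfield_1 E)
next
  case (insert j J)
  show ?case
  proof (cases "\<forall>i\<in>I. a j i = 0")
    case True
    have "card J < card I" using insert.prems insert.hyps by simp
    with insert.IH[of I a] insert.prems obtain x where
      "(\<forall>i\<in>I. x i \<in> E) \<and> (\<exists>i\<in>I. x i \<noteq> 0) \<and> (\<forall>j\<in>J. (\<Sum>i\<in>I. a j i * x i) = 0)"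
      by auto
    then show ?thesis using True by (intro exI[of _ x]) auto
  next
    case False
    then obtain i0 where i0: "i0 \<in> I" "a j i0 \<noteq> 0" by auto
    \<comment> \<open>eliminate the unknown \<open>i0\<close> using equation \<open>j\<close>\<close>
    define I' where "I' = I - {i0}"
    define a' where "a' = (\<lambda>k i. a k i - a k i0 * a j i / a j i0)"
    have fI': "finite I'" using insert.prems by (simp add: I'_def)
    have cI': "card J < card I'" using insert.prems insert.hyps i0 by (simp add: I'_def)
    have a'E: "\<forall>k\<in>J. \<forall>i\<in>I'. a' k i \<in> E"
      using insert.prems(3) i0 by (auto simp: a'_def I'_def E intro!: subfield_diff subfield_mult subfield_divide)
    from insert.IH[OF fI' cI' a'E] obtain x' where x':
      "\<forall>i\<in>I'. x' i \<in> E" "\<exists>i\<in>I'. x' i \<noteq> 0" "\<forall>k\<in>J. (\<Sum>i\<in>I'. a' k i * x' i) = 0"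
      by blast
    define x0 where "x0 = - (\<Sum>i\<in>I'. a j i * x' i) / a j i0"
    define x where "x = (\<lambda>i. if i = i0 then x0 else x' i)"
    have I_eq: "I = insert i0 I'" "i0 \<notin> I'" using i0 by (auto simp: I'_def)
    have sumx: "(\<Sum>i\<in>I. c i * x i) = c i0 * x0 + (\<Sum>i\<in>I'. c i * x' i)" for c
      using I_eq fI' by (simp add: x_def) (rule sum.cong, auto)
    have "x0 \<in> E" unfolding x0_def using x'(1) insert.prems(3) i0
      by (auto intro!: subfield_divide subfield_uminus subfield_sum subfield_mult E simp: I'_def)
    moreover have "\<forall>k\<in>insert j J. (\<Sum>i\<in>I. a k i * x i) = 0"
    proof
      fix k assume k: "k \<in> insert j J"
      show "(\<Sum>i\<in>I. a k i * x i) = 0"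
      proof (cases "k = j")
        case True
        then show ?thesis using i0 by (simp add: sumx x0_def)
      next
        case False
        then have kJ: "k \<in> J" using k by auto
        have "(\<Sum>i\<in>I. a k i * x i) = a k i0 * x0 + (\<Sum>i\<in>I'. a k i * x' i)" by (rule sumx)
        also have "\<dots> = (\<Sum>i\<in>I'. a' k i * x' i)"
          using i0 by (simp add: x0_def a'_def algebra_simps sum_subtractf sum_distrib_left
              sum_divide_distrib)
        finally show ?thesis using x'(3) kJ by simp
      qed
    qed
    ultimately show ?thesis using x' I_eq
      by (intro exI[of _ x]) (auto simp: x_def)
  qed
qed

definition lin_indep_fam_over :: "'a::field set \<Rightarrow> ('i \<Rightarrow> 'a) \<Rightarrow> 'i set \<Rightarrow> bool" where
  "lin_indep_fam_over K f I \<longleftrightarrow> (\<forall>c. (\<forall>i\<in>I. c i \<in> K) \<and> (\<Sum>i\<in>I. c i * f i) = 0 \<longrightarrow> (\<forall>i\<in>I. c i = 0))"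

definition span_fam_over :: "'a::field set \<Rightarrow> ('i \<Rightarrow> 'a) \<Rightarrow> 'i set \<Rightarrow> 'a set" where
  "span_fam_over K f I = {\<Sum>i\<in>I. c i * f i | c. \<forall>i\<in>I. c i \<in> K}"

lemma span_over_conv_fam: "span_over K S = span_fam_over K id S"
  by (simp add: span_over_def span_fam_over_def)

lemma lin_indep_fam_overD: "lin_indep_fam_over K f I \<Longrightarrow> (\<And>i. i \<in> I \<Longrightarrow> c i \<in> K) \<Longrightarrow> (\<Sum>i\<in>I. c i * f i) = 0 \<Longrightarrow> i \<in> I \<Longrightarrow> c i = 0"
  unfolding lin_indep_fam_over_def by blast

lemma lin_indep_overD: "lin_indep_over K S \<Longrightarrow> (\<And>i. i \<in> S \<Longrightarrow> c i \<in> K) \<Longrightarrow> (\<Sum>i\<in>S. c i * i) = 0 \<Longrightarrow> i \<in> S \<Longrightarrow> c i = 0"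
  unfolding lin_indep_over_def by blast

lemma span_fam_overI: "(\<And>i. i \<in> I \<Longrightarrow> c i \<in> K) \<Longrightarrow> x = (\<Sum>i\<in>I. c i * f i) \<Longrightarrow> x \<in> span_fam_over K f I"
  unfolding span_fam_over_def by blast

lemma span_fam_overE: assumes "x \<in> span_fam_over K f I"
  obtains c where "\<And>i. i \<in> I \<Longrightarrow> c i \<in> K" "x = (\<Sum>i\<in>I. c i * f i)"
  using assms unfolding span_fam_over_def by auto

lemma span_overI: "(\<And>i. i \<in> S \<Longrightarrow> c i \<in> K) \<Longrightarrow> x = (\<Sum>i\<in>S. c i * i) \<Longrightarrow> x \<in> span_over K S"
  unfolding span_over_def by blast

lemma span_overE: assumes "x \<in> span_over K S"
  obtains c where "\<And>i. i \<in> S \<Longrightarrow> c i \<in> K" "x = (\<Sum>i\<in>S. c i * i)"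
  using assms unfolding span_over_def by auto

lemma span_fam_over_generator: assumes "is_subfield K" "finite I" "j \<in> I" shows "f j \<in> span_fam_over K f I"
proof (rule span_fam_overI[of I "\<lambda>i. if i = j then 1 else 0"])
  have "(\<Sum>i\<in>I. (if i = j then 1 else 0) * f i) = (\<Sum>i\<in>I. if i = j then f i else 0)"
    by (rule sum.cong) auto
  then show "f j = (\<Sum>i\<in>I. (if i = j then 1 else 0) * f i)" using assms by simp
qed (use assms in \<open>auto simp: subfield_0 subfield_1\<close>)

lemma span_fam_over_subset:
  assumes "is_subfield L" "K \<subseteq> L" "f ` I \<subseteq> L"
  shows "span_fam_over K f I \<subseteq> L"
proof
  fix x assume "x \<in> span_fam_over K f I"
  then obtain c where c: "\<And>i. i \<in> I \<Longrightarrow> c i \<in> K" "x = (\<Sum>i\<in>I. c i * f i)" using span_fam_overE by metis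
  show "x \<in> L" unfolding c(2) using assms c(1)
    by (intro subfield_sum subfield_mult) auto
qed

lemma span_fam_over_add: "x \<in> span_fam_over K f I \<Longrightarrow> y \<in> span_fam_over K f I \<Longrightarrow> is_subfield K \<Longrightarrow> x + y \<in> span_fam_over K f I"
  apply (elim span_fam_overE)
  subgoal for c d by (rule span_fam_overI[of I "\<lambda>i. c i + d i"]) (auto simp: subfield_add algebra_simps sum.distrib)
  done

lemma span_fam_over_scale: "x \<in> span_fam_over K f I \<Longrightarrow> k \<in> K \<Longrightarrow> is_subfield K \<Longrightarrow> k * x \<in> span_fam_over K f I"
  apply (elim span_fam_overE)
  subgoal for c by (rule span_fam_overI[of I "\<lambda>i. k * c i"]) (auto simp: subfield_mult algebra_simps sum_distrib_left)
  done

lemma span_fam_over_0: "is_subfield K \<Longrightarrow> 0 \<in> span_fam_over K f I"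
  by (rule span_fam_overI[of I "\<lambda>i. 0"]) (auto simp: subfield_0)

lemma span_fam_over_sum: "is_subfield K \<Longrightarrow> (\<And>j. j \<in> A \<Longrightarrow> g j \<in> span_fam_over K f I) \<Longrightarrow> sum g A \<in> span_fam_over K f I"
  by (induction A rule: infinite_finite_induct) (auto simp: span_fam_over_0 span_fam_over_add)

lemma inj_on_lin_indep_fam:
  assumes "lin_indep_fam_over K f I" "is_subfield K"
  shows "inj_on f I"
proof (rule inj_onI, rule ccontr)
  fix i j assume ij: "i \<in> I" "j \<in> I" "f i = f j" "i \<noteq> j"
  have fin: "finite I"
  proof (rule ccontr)
    assume "infinite I"
    then have "(\<Sum>k\<in>I. (\<lambda>k. 1) k * f k) = 0" by simp
    from lin_indep_fam_overD[OF assms(1) _ this ij(1)] show False using assms(2) subfield_1 by auto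
  qed
  let ?c = "\<lambda>k. if k = i then 1 else if k = j then -1 else (0::'a)"
  have "(\<Sum>k\<in>I. ?c k * f k) = (\<Sum>k\<in>I. (if k = i then f i else 0) + (if k = j then - f j else 0))"
    by (rule sum.cong) (use ij in auto)
  also have "\<dots> = 0" using ij fin by (simp add: sum.distrib)
  finally have s0: "(\<Sum>k\<in>I. ?c k * f k) = 0" .
  have "\<And>k. k \<in> I \<Longrightarrow> ?c k \<in> K"
    using subfield_0[OF assms(2)] subfield_1[OF assms(2)] subfield_uminus[OF assms(2) subfield_1[OF assms(2)]] by simp
  then have "?c i = 0" using lin_indep_fam_overD[OF assms(1), of ?c i] ij s0 by blast
  then show False by simp
qed

lemma lin_indep_over_image_iff:
  assumes "inj_on f I"
  shows "lin_indep_over K (f ` I) \<longleftrightarrow> lin_indep_fam_over K f I"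
proof
  assume L: "lin_indep_over K (f ` I)"
  show "lin_indep_fam_over K f I" unfolding lin_indep_fam_over_def
  proof (intro allI impI ballI)
    fix c i assume c: "(\<forall>i\<in>I. c i \<in> K) \<and> (\<Sum>i\<in>I. c i * f i) = 0" and i: "i \<in> I"
    let ?d = "\<lambda>x. c (the_inv_into I f x)"
    have "(\<Sum>x\<in>f ` I. ?d x * x) = (\<Sum>i\<in>I. c i * f i)"
      using assms by (simp add: sum.reindex the_inv_into_f_f)
    then have s: "(\<Sum>x\<in>f ` I. ?d x * x) = 0" using c by simp
    have m: "?d x \<in> K" if x: "x \<in> f ` I" for x
    proof -
      obtain i' where "i' \<in> I" "x = f i'" using x by blast
      then show ?thesis using c the_inv_into_f_f[OF assms] by simp
    qed
    have "?d (f i) = 0" by (rule lin_indep_overD[OF L m s]) (use i in auto)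
    then show "c i = 0" using assms i by (simp add: the_inv_into_f_f)
  qed
next
  assume L: "lin_indep_fam_over K f I"
  show "lin_indep_over K (f ` I)" unfolding lin_indep_over_def
  proof (intro allI impI ballI)
    fix c x assume c: "(\<forall>s\<in>f ` I. c s \<in> K) \<and> (\<Sum>s\<in>f ` I. c s * s) = 0" and x: "x \<in> f ` I"
    have "(\<Sum>i\<in>I. c (f i) * f i) = 0" using c sum.reindex[OF assms, of "\<lambda>s. c s * s"] by (simp add: o_def)
    moreover obtain i where "i \<in> I" "x = f i" using x by blast
    moreover have "\<And>i. i \<in> I \<Longrightarrow> c (f i) \<in> K" using c by blast
    ultimately show "c x = 0" using lin_indep_fam_overD[OF L, of "\<lambda>i. c (f i)"] by blast
  qed
qed

lemma span_over_image:
  assumes "inj_on f I"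
  shows "span_over K (f ` I) = span_fam_over K f I"
proof
  show "span_over K (f ` I) \<subseteq> span_fam_over K f I"
  proof
    fix x assume "x \<in> span_over K (f ` I)"
    then obtain c where c: "\<And>s. s \<in> f ` I \<Longrightarrow> c s \<in> K" "x = (\<Sum>s\<in>f ` I. c s * s)" using span_overE by metis
    show "x \<in> span_fam_over K f I"
      by (rule span_fam_overI[of I "\<lambda>i. c (f i)"]) (use c sum.reindex[OF assms, of "\<lambda>s. c s * s"] in \<open>auto simp: o_def\<close>)
  qed
next
  show "span_fam_over K f I \<subseteq> span_over K (f ` I)"
  proof
    fix x assume "x \<in> span_fam_over K f I"
    then obtain c where c: "\<And>i. i \<in> I \<Longrightarrow> c i \<in> K" "x = (\<Sum>i\<in>I. c i * f i)" using span_fam_overE by metis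
    show "x \<in> span_over K (f ` I)"
    proof (rule span_overI[of "f ` I" "\<lambda>s. c (the_inv_into I f s)"])
      show "\<And>s. s \<in> f ` I \<Longrightarrow> c (the_inv_into I f s) \<in> K" using c the_inv_into_f_f[OF assms] by auto
      have "(\<Sum>s\<in>f ` I. c (the_inv_into I f s) * s) = (\<Sum>i\<in>I. c (the_inv_into I f (f i)) * f i)"
        using sum.reindex[OF assms, of "\<lambda>s. c (the_inv_into I f s) * s"] by (simp add: o_def)
      also have "\<dots> = (\<Sum>i\<in>I. c i * f i)" by (rule sum.cong) (simp_all add: the_inv_into_f_f[OF assms])
      finally show "x = (\<Sum>s\<in>f ` I. c (the_inv_into I f s) * s)" using c by simp
    qed
  qed
qed

lemma not_lin_indep_if_card_gt:
  assumes K: "is_subfield K" and fB: "finite B" and fS: "finite S"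
    and sub: "S \<subseteq> span_fam_over K g B" and card: "card B < card S"
  shows "\<not> lin_indep_over K S"
proof
  assume ind: "lin_indep_over K S"
  have "\<forall>s\<in>S. \<exists>c. (\<forall>b\<in>B. c b \<in> K) \<and> s = (\<Sum>b\<in>B. c b * g b)"
    using sub unfolding span_fam_over_def by blast
  then obtain C where C: "\<And>s b. s \<in> S \<Longrightarrow> b \<in> B \<Longrightarrow> C s b \<in> K"
      "\<And>s. s \<in> S \<Longrightarrow> s = (\<Sum>b\<in>B. C s b * g b)"
    by metis
  obtain x where x: "\<forall>s\<in>S. x s \<in> K" "\<exists>s\<in>S. x s \<noteq> 0" "\<forall>b\<in>B. (\<Sum>s\<in>S. C s b * x s) = 0"
    using homogeneous_system_solvable[where a="\<lambda>b s. C s b", OF K fB fS card] C(1) by blast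
  have "(\<Sum>s\<in>S. x s * s) = (\<Sum>s\<in>S. x s * (\<Sum>b\<in>B. C s b * g b))"
    using C(2) by (intro sum.cong) auto
  also have "\<dots> = (\<Sum>b\<in>B. (\<Sum>s\<in>S. C s b * x s) * g b)"
    by (simp add: sum_distrib_left sum_distrib_right sum.swap[of _ S] mult_ac)
  also have "\<dots> = 0" using x(3) by simp
  finally show False using lin_indep_overD[OF ind, of x] x(1,2) by blast
qed

lemma lin_indep_over_insert:
  assumes K: "is_subfield K" and fS: "finite S" and ind: "lin_indep_over K S"
    and a: "a \<notin> span_over K S"
  shows "lin_indep_over K (insert a S)"
proof -
  have aS: "a \<notin> S" using a span_fam_over_generator[OF K fS, of _ id] by (auto simp: span_over_conv_fam)
  show ?thesis unfolding lin_indep_over_def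
  proof (intro allI impI)
    fix c assume c: "(\<forall>s\<in>insert a S. c s \<in> K) \<and> (\<Sum>s\<in>insert a S. c s * s) = 0"
    then have eq: "c a * a + (\<Sum>s\<in>S. c s * s) = 0" using fS aS by simp
    have ca: "c a = 0"
    proof (rule ccontr)
      assume nz: "c a \<noteq> 0"
      have "a = (\<Sum>s\<in>S. (- c s / c a) * s)"
        using eq nz by (simp add: sum_divide_distrib[symmetric] field_simps sum_negf eq_neg_iff_add_eq_0)
      then have "a \<in> span_over K S" using c K
        by (intro span_overI[of S "\<lambda>s. - c s / c a"]) (auto intro!: subfield_divide subfield_uminus)
      then show False using a by simp
    qed
    then have "(\<Sum>s\<in>S. c s * s) = 0" using eq by simp
    then have "\<forall>s\<in>S. c s = 0" using lin_indep_overD[OF ind, of c] c by blast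
    then show "\<forall>s\<in>insert a S. c s = 0" using ca by simp
  qed
qed

lemma exists_basis_card_le:
  assumes K: "is_subfield K" and L: "is_subfield L" "K \<subseteq> L" and fB: "finite B"
    and sub: "L \<subseteq> span_fam_over K g B"
  shows "\<exists>C. is_basis K L C \<and> card C \<le> card B"
proof -
  let ?Cs = "{C. finite C \<and> C \<subseteq> L \<and> lin_indep_over K C}"
  have bnd: "card C \<le> card B" if "C \<in> ?Cs" for C
  proof (rule ccontr)
    assume "\<not> card C \<le> card B"
    then have "card B < card C" by simp
    moreover have "finite C" "C \<subseteq> span_fam_over K g B" "lin_indep_over K C" using that sub by auto
    ultimately show False using not_lin_indep_if_card_gt[OF K fB, of C g] by blast
  qed
  have "lin_indep_over K {}" unfolding lin_indep_over_def by blast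
  then have ne: "{} \<in> ?Cs" by simp
  define n where "n = Max (card ` ?Cs)"
  have "card ` ?Cs \<subseteq> {..card B}" using bnd by (simp add: image_subset_iff)
  then have fin: "finite (card ` ?Cs)" using finite_subset by blast
  have "n \<in> card ` ?Cs" unfolding n_def using fin ne by (intro Max_in) auto
  then obtain C where C: "C \<in> ?Cs" "card C = n" by auto
  have maxC: "card D \<le> card C" if "D \<in> ?Cs" for D using that fin C(2) unfolding n_def by auto
  have "span_over K C \<subseteq> L" unfolding span_over_conv_fam
    using C(1) by (intro span_fam_over_subset[OF L]) auto
  moreover have "L \<subseteq> span_over K C"
  proof
    fix x assume x: "x \<in> L"
    show "x \<in> span_over K C"
    proof (rule ccontr)
      assume "x \<notin> span_over K C"
      then have "lin_indep_over K (insert x C)" using C(1) lin_indep_over_insert[OF K] by blast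
      then have "insert x C \<in> ?Cs" using C(1) x by auto
      have "x \<notin> C" using C(1) \<open>x \<notin> span_over K C\<close> span_fam_over_generator[OF K, of C x id]
        by (auto simp: span_over_conv_fam)
      then have "card (insert x C) = Suc (card C)" using C(1) by simp
      with maxC[OF \<open>insert x C \<in> ?Cs\<close>] show False by simp
    qed
  qed
  ultimately show ?thesis using C(1) bnd[OF C(1)] unfolding is_basis_def by blast
qed

lemma basis_card_eq:
  assumes K: "is_subfield K" and B: "is_basis K L B" and C: "is_basis K L C"
  shows "card B = card C"
proof -
  have fB: "finite B" "B \<subseteq> span_fam_over K id C" "lin_indep_over K B"
    using B C by (auto simp: is_basis_def span_over_conv_fam[symmetric])
  have fC: "finite C" "C \<subseteq> span_fam_over K id B" "lin_indep_over K C"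
    using B C by (auto simp: is_basis_def span_over_conv_fam[symmetric])
  have "\<not> card C < card B" using not_lin_indep_if_card_gt[OF K fC(1) fB(1) fB(2)] fB(3) by blast
  moreover have "\<not> card B < card C" using not_lin_indep_if_card_gt[OF K fB(1) fC(1) fC(2)] fC(3) by blast
  ultimately show ?thesis by simp
qed

lemma ext_degree_eq_card_basis:
  assumes K: "is_subfield K" and B: "is_basis K L B"
  shows "ext_degree K L = card B"
proof -
  have "is_basis K L (SOME B. is_basis K L B)" using B by (rule someI)
  then have "card (SOME B. is_basis K L B) = card B" using B basis_card_eq[OF K] by blast
  moreover have "\<exists>B. is_basis K L B" using B by blast
  ultimately show ?thesis unfolding ext_degree_def by simp
qed

lemma finite_ext_obtain_basis:
  assumes "finite_ext K L" obtains B where "is_basis K L B" "ext_degree K L = card B"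
  using assms ext_degree_eq_card_basis unfolding finite_ext_def by blast

lemma finite_ext_if_spanning:
  assumes K: "is_subfield K" and L: "is_subfield L" "K \<subseteq> L" and fB: "finite B"
    and sub: "L \<subseteq> span_fam_over K g B"
  shows "finite_ext K L \<and> ext_degree K L \<le> card B"
  using exists_basis_card_le[OF assms] ext_degree_eq_card_basis[OF K] K L unfolding finite_ext_def by metis

lemma finite_ext_intermediate:
  assumes L: "finite_ext K L" and A: "is_subfield A" "K \<subseteq> A" "A \<subseteq> L"
  shows "finite_ext K A \<and> ext_degree K A \<le> ext_degree K L"
proof -
  obtain B where B: "is_basis K L B" "ext_degree K L = card B" using L by (rule finite_ext_obtain_basis)
  have K: "is_subfield K" using L by (simp add: finite_ext_def)
  show ?thesis using finite_ext_if_spanning[OF K A(1,2), of B id] B A(3) by (auto simp: is_basis_def span_over_conv_fam)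
qed

lemma card_lin_indep_le_ext_degree:
  assumes L: "finite_ext K L" and S: "finite S" "S \<subseteq> L" "lin_indep_over K S"
  shows "card S \<le> ext_degree K L"
proof -
  obtain B where B: "is_basis K L B" "ext_degree K L = card B" using L by (rule finite_ext_obtain_basis)
  have K: "is_subfield K" using L by (simp add: finite_ext_def)
  show ?thesis using not_lin_indep_if_card_gt[OF K _ S(1), of B id] B S by (force simp: is_basis_def span_over_conv_fam)
qed

lemma intermediate_eq_if_ext_degree_eq:
  assumes L: "finite_ext K L" and A: "is_subfield A" "K \<subseteq> A" "A \<subseteq> L"
    and eq: "ext_degree K A = ext_degree K L"
  shows "A = L"
proof (rule ccontr)
  assume "A \<noteq> L"
  then obtain x where x: "x \<in> L" "x \<notin> A" using A by auto
  have K: "is_subfield K" using L by (simp add: finite_ext_def)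
  have FA: "finite_ext K A" using finite_ext_intermediate[OF assms(1-4)] by simp
  obtain C where C: "is_basis K A C" "ext_degree K A = card C" using FA by (rule finite_ext_obtain_basis)
  have "x \<notin> span_over K C" using C x by (simp add: is_basis_def)
  then have "lin_indep_over K (insert x C)" using C lin_indep_over_insert[OF K] by (auto simp: is_basis_def)
  then have "card (insert x C) \<le> ext_degree K L"
    using card_lin_indep_le_ext_degree[OF L] C x A by (auto simp: is_basis_def)
  moreover have "card (insert x C) = card C + 1"
  proof -
    have "finite C" "x \<notin> C" using C x by (auto simp: is_basis_def)
    then show ?thesis by simp
  qed
  ultimately show False using C eq by simp
qed

lemma ext_degree_pos:
  assumes "finite_ext K L" shows "ext_degree K L > 0"
proof -
  obtain B where B: "is_basis K L B" "ext_degree K L = card B" using assms by (rule finite_ext_obtain_basis)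
  have "1 \<in> L" using assms by (simp add: finite_ext_def subfield_1)
  have "B \<noteq> {}"
  proof
    assume "B = {}"
    then have "span_over K B = {0}" by (simp add: span_over_def)
    then show False using B(1) \<open>1 \<in> L\<close> unfolding is_basis_def by (metis singletonD one_neq_zero)
  qed
  moreover have "finite B" using B by (simp add: is_basis_def)
  ultimately show ?thesis using B by (simp add: card_gt_0_iff)
qed

lemma ext_degree_refl:
  assumes K: "is_subfield K" shows "finite_ext K K \<and> ext_degree K K = 1"
proof -
  have "K \<subseteq> span_fam_over K id {1}"
    by (auto intro!: span_fam_overI[of "{1}" "\<lambda>_. x" for x])
  from finite_ext_if_spanning[OF K K _ _ this] have "finite_ext K K" "ext_degree K K \<le> 1" by auto
  then show ?thesis using ext_degree_pos by fastforce
qed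

lemma eq_if_ext_degree_1:
  assumes "finite_ext K L" "ext_degree K L = 1" shows "L = K"
  using intermediate_eq_if_ext_degree_eq[OF assms(1), of K] ext_degree_refl assms
  by (auto simp: finite_ext_def)

lemma finite_ext_fam_basis:
  assumes K: "is_subfield K" and L: "is_subfield L" "K \<subseteq> L" and fI: "finite I"
    and ind: "lin_indep_fam_over K f I" and sp: "span_fam_over K f I = L"
  shows "finite_ext K L \<and> ext_degree K L = card I"
proof -
  have inj: "inj_on f I" by (rule inj_on_lin_indep_fam[OF ind K])
  have B: "is_basis K L (f ` I)"
    unfolding is_basis_def
  proof (intro conjI)
    show "finite (f ` I)" using fI by simp
    show "f ` I \<subseteq> L" using span_fam_over_generator[OF K fI, of _ f] sp by blast
    show "lin_indep_over K (f ` I)" using lin_indep_over_image_iff[OF inj] ind by simp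
    show "span_over K (f ` I) = L" using span_over_image[OF inj] sp by simp
  qed
  then show ?thesis using ext_degree_eq_card_basis[OF K B] card_image[OF inj] K L
    unfolding finite_ext_def by auto
qed

lemma lin_indep_fam_products:
  assumes E: "is_subfield E" "K \<subseteq> E" and B: "B \<subseteq> E" "lin_indep_over K B"
    and C: "lin_indep_over E C"
  shows "lin_indep_fam_over K (\<lambda>(b, c). b * c) (B \<times> C)"
  unfolding lin_indep_fam_over_def
proof (intro allI impI ballI)
  fix k p assume k: "(\<forall>p\<in>B \<times> C. k p \<in> K) \<and> (\<Sum>p\<in>B \<times> C. k p * (case p of (b, c) \<Rightarrow> b * c)) = 0"
    and p: "p \<in> B \<times> C"
  have "(\<Sum>p\<in>B \<times> C. k p * (case p of (b, c) \<Rightarrow> b * c)) = (\<Sum>b\<in>B. \<Sum>c\<in>C. k (b, c) * (b * c))"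
    unfolding sum.cartesian_product by (intro sum.cong) auto
  also have "\<dots> = (\<Sum>c\<in>C. (\<Sum>b\<in>B. k (b, c) * b) * c)"
    by (subst sum.swap) (simp add: sum_distrib_right mult.assoc)
  finally have s: "(\<Sum>c\<in>C. (\<Sum>b\<in>B. k (b, c) * b) * c) = 0" using k by simp
  have inE: "(\<Sum>b\<in>B. k (b, c) * b) \<in> E" if "c \<in> C" for c
    using k that B(1) E(2) by (intro subfield_sum[OF E(1)] subfield_mult[OF E(1)]) auto
  obtain b c where bc: "p = (b, c)" "b \<in> B" "c \<in> C" using p by blast
  have "(\<Sum>b\<in>B. k (b, c) * b) = 0"
    using lin_indep_overD[OF C, of "\<lambda>c. \<Sum>b\<in>B. k (b, c) * b", OF inE s bc(3)] .
  moreover have "\<And>b. b \<in> B \<Longrightarrow> k (b, c) \<in> K" using k bc by blast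
  ultimately show "k p = 0" using lin_indep_overD[OF B(2), of "\<lambda>b. k (b, c)"] bc by blast
qed

lemma span_fam_products:
  assumes B: "span_over K B = E" and C: "span_over E C = L"
  shows "L \<subseteq> span_fam_over K (\<lambda>(b, c). b * c) (B \<times> C)"
proof
  fix x assume "x \<in> L"
  then obtain e where e: "\<And>c. c \<in> C \<Longrightarrow> e c \<in> E" "x = (\<Sum>c\<in>C. e c * c)"
    using C span_overE by metis
  have "\<forall>c\<in>C. \<exists>k. (\<forall>b\<in>B. k b \<in> K) \<and> e c = (\<Sum>b\<in>B. k b * b)"
  proof
    fix c assume "c \<in> C"
    then have "e c \<in> span_over K B" using e(1) B by simp
    then show "\<exists>k. (\<forall>b\<in>B. k b \<in> K) \<and> e c = (\<Sum>b\<in>B. k b * b)" by (elim span_overE) blast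
  qed
  then obtain k where k: "\<And>c b. c \<in> C \<Longrightarrow> b \<in> B \<Longrightarrow> k c b \<in> K"
    "\<And>c. c \<in> C \<Longrightarrow> e c = (\<Sum>b\<in>B. k c b * b)" by metis
  show "x \<in> span_fam_over K (\<lambda>(b, c). b * c) (B \<times> C)"
  proof (rule span_fam_overI[of "B \<times> C" "\<lambda>(b, c). k c b"])
    show "\<And>p. p \<in> B \<times> C \<Longrightarrow> (case p of (b, c) \<Rightarrow> k c b) \<in> K" using k(1) by auto
    have "x = (\<Sum>c\<in>C. (\<Sum>b\<in>B. k c b * b) * c)" using e(2) k(2) by simp
    also have "\<dots> = (\<Sum>b\<in>B. \<Sum>c\<in>C. k c b * (b * c))"
      by (subst sum.swap) (simp add: sum_distrib_right mult.assoc)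
    also have "\<dots> = (\<Sum>p\<in>B \<times> C. (case p of (b, c) \<Rightarrow> k c b) * (case p of (b, c) \<Rightarrow> b * c))"
      unfolding sum.cartesian_product by (intro sum.cong) auto
    finally show "x = (\<Sum>p\<in>B \<times> C. (case p of (b, c) \<Rightarrow> k c b) * (case p of (b, c) \<Rightarrow> b * c))" .
  qed
qed

lemma ext_degree_tower:
  assumes KE: "finite_ext K E" and EL: "finite_ext E L"
  shows "finite_ext K L \<and> ext_degree K L = ext_degree K E * ext_degree E L"
proof -
  obtain B where B: "is_basis K E B" "ext_degree K E = card B" using finite_ext_obtain_basis[OF KE] by blast
  obtain C where C: "is_basis E L C" "ext_degree E L = card C" using finite_ext_obtain_basis[OF EL] by blast
  have K: "is_subfield K" and E: "is_subfield E" and L: "is_subfield L" and KsE: "K \<subseteq> E" and EsL: "E \<subseteq> L"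
    using KE EL by (auto simp: finite_ext_def)
  have fB: "finite B" "B \<subseteq> E" "lin_indep_over K B" "span_over K B = E" using B by (auto simp: is_basis_def)
  have fC: "finite C" "C \<subseteq> L" "lin_indep_over E C" "span_over E C = L" using C by (auto simp: is_basis_def)
  have "span_fam_over K (\<lambda>(b, c). b * c) (B \<times> C) \<subseteq> L"
    using fB(2) fC(2) KsE EsL by (intro span_fam_over_subset[OF L]) (auto intro!: subfield_mult[OF L])
  then have "span_fam_over K (\<lambda>(b, c). b * c) (B \<times> C) = L"
    using span_fam_products[OF fB(4) fC(4)] by blast
  then have "finite_ext K L" "ext_degree K L = card (B \<times> C)"
    using finite_ext_fam_basis[OF K L _ _ lin_indep_fam_products[OF E KsE fB(2,3) fC(3)]] KsE EsL fB(1) fC(1)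
    by auto
  then show ?thesis using B C by (simp add: card_cartesian_product)
qed

lemma finite_ext_upper:
  assumes KL: "finite_ext K L" and E: "is_subfield E" "K \<subseteq> E" "E \<subseteq> L"
  shows "finite_ext E L"
proof -
  obtain B where B: "is_basis K L B" "ext_degree K L = card B" using finite_ext_obtain_basis[OF KL] by blast
  have L: "is_subfield L" using KL by (simp add: finite_ext_def)
  have "L \<subseteq> span_fam_over E id B"
  proof
    fix x assume "x \<in> L"
    then obtain c where c: "\<And>b. b \<in> B \<Longrightarrow> c b \<in> K" "x = (\<Sum>b\<in>B. c b * b)"
      using B(1) span_overE unfolding is_basis_def by metis
    show "x \<in> span_fam_over E id B" by (rule span_fam_overI[of B c]) (use c E in auto)
  qed
  then show ?thesis using finite_ext_if_spanning[OF E(1) L E(3), of B id] B by (auto simp: is_basis_def)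
qed

section \<open>Embeddings\<close>

definition hom_on :: "'a::field set \<Rightarrow> ('a \<Rightarrow> 'a) \<Rightarrow> bool" where
  "hom_on L \<sigma> \<longleftrightarrow> (\<forall>x\<in>L. \<forall>y\<in>L. \<sigma> (x + y) = \<sigma> x + \<sigma> y \<and> \<sigma> (x * y) = \<sigma> x * \<sigma> y)"

locale embedding =
  fixes K L :: "'a::field set" and \<sigma> :: "'a \<Rightarrow> 'a"
  assumes K: "is_subfield K" and L: "is_subfield L" and KL: "K \<subseteq> L"
    and hom: "hom_on L \<sigma>" and fixes_K: "\<forall>x\<in>K. \<sigma> x = x"
begin

lemma emb_add: "x \<in> L \<Longrightarrow> y \<in> L \<Longrightarrow> \<sigma> (x + y) = \<sigma> x + \<sigma> y"
  using hom by (simp add: hom_on_def)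
lemma emb_mult: "x \<in> L \<Longrightarrow> y \<in> L \<Longrightarrow> \<sigma> (x * y) = \<sigma> x * \<sigma> y"
  using hom by (simp add: hom_on_def)
lemma emb_fix: "x \<in> K \<Longrightarrow> \<sigma> x = x"
  using fixes_K by simp
lemma emb_0: "\<sigma> 0 = 0"
  using emb_fix[of 0] subfield_0[OF K] by simp
lemma emb_1: "\<sigma> 1 = 1"
  using emb_fix[of 1] subfield_1[OF K] by simp
lemma emb_uminus: "x \<in> L \<Longrightarrow> \<sigma> (- x) = - \<sigma> x"
  using emb_add[of x "-x"] subfield_uminus[OF L, of x] emb_0 by (simp add: eq_neg_iff_add_eq_0 add.commute)
lemma emb_diff: "x \<in> L \<Longrightarrow> y \<in> L \<Longrightarrow> \<sigma> (x - y) = \<sigma> x - \<sigma> y"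
  using emb_add[of x "-y"] emb_uminus[of y] subfield_uminus[OF L, of y] by simp
lemma emb_scale: "k \<in> K \<Longrightarrow> x \<in> L \<Longrightarrow> \<sigma> (k * x) = k * \<sigma> x"
  using emb_mult[of k x] emb_fix[of k] KL by auto
lemma emb_inverse: "x \<in> L \<Longrightarrow> \<sigma> (inverse x) = inverse (\<sigma> x)"
proof (cases "x = 0")
  case True then show ?thesis using emb_0 by simp
next
  case False
  assume x: "x \<in> L"
  have "\<sigma> x * \<sigma> (inverse x) = 1" using emb_mult[OF x subfield_inverse[OF L x]] emb_1 False by simp
  then show ?thesis by (simp add: inverse_unique)
qed
lemma emb_nonzero: "x \<in> L \<Longrightarrow> x \<noteq> 0 \<Longrightarrow> \<sigma> x \<noteq> 0"
  using emb_mult[of x "inverse x"] subfield_inverse[OF L, of x] emb_1 by auto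
lemma inj_on_emb: "inj_on \<sigma> L"
proof (rule inj_onI)
  fix x y assume "x \<in> L" "y \<in> L" "\<sigma> x = \<sigma> y"
  then have "\<sigma> (x - y) = 0" using emb_diff by simp
  then show "x = y" using emb_nonzero[of "x - y"] subfield_diff[OF L \<open>x \<in> L\<close> \<open>y \<in> L\<close>] by auto
qed
lemma emb_sum: "(\<And>i. i \<in> A \<Longrightarrow> g i \<in> L) \<Longrightarrow> \<sigma> (sum g A) = (\<Sum>i\<in>A. \<sigma> (g i))"
proof (induction A rule: infinite_finite_induct)
  case (insert a A)
  then show ?case using emb_add[of "g a" "sum g A"] subfield_sum[OF L, of A g] by simp
qed (auto simp: emb_0)

lemma emb_lin_comb:
  assumes "\<And>i. i \<in> A \<Longrightarrow> c i \<in> K" "\<And>i. i \<in> A \<Longrightarrow> v i \<in> L"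
  shows "\<sigma> (\<Sum>i\<in>A. c i * v i) = (\<Sum>i\<in>A. c i * \<sigma> (v i))"
proof -
  have "\<sigma> (\<Sum>i\<in>A. c i * v i) = (\<Sum>i\<in>A. \<sigma> (c i * v i))"
    using assms KL by (intro emb_sum subfield_mult[OF L]) auto
  also have "\<dots> = (\<Sum>i\<in>A. c i * \<sigma> (v i))"
    using assms by (intro sum.cong) (auto simp: emb_scale)
  finally show ?thesis .
qed

lemma subfield_preimage: "is_subfield T \<Longrightarrow> is_subfield {x \<in> L. \<sigma> x \<in> T}"
  unfolding is_subfield_def
  using emb_0 emb_1 emb_add emb_mult emb_uminus emb_inverse
    subfield_0[OF L] subfield_1[OF L] subfield_add[OF L] subfield_mult[OF L]
    subfield_uminus[OF L] subfield_inverse[OF L]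
  by auto

lemma subfield_equalizer:
  assumes "embedding K L \<tau>"
  shows "is_subfield {x \<in> L. \<sigma> x = \<tau> x}"
proof -
  interpret \<tau>: embedding K L \<tau> by (rule assms)
  show ?thesis
    unfolding is_subfield_def
    using emb_0 emb_1 emb_add emb_mult emb_uminus emb_inverse
      \<tau>.emb_0 \<tau>.emb_1 \<tau>.emb_add \<tau>.emb_mult \<tau>.emb_uminus \<tau>.emb_inverse
      subfield_0[OF L] subfield_1[OF L] subfield_add[OF L] subfield_mult[OF L]
      subfield_uminus[OF L] subfield_inverse[OF L]
    by auto
qed

end

lemma embedding_id: "is_subfield K \<Longrightarrow> is_subfield L \<Longrightarrow> K \<subseteq> L \<Longrightarrow> embedding K L id"
  by (simp add: embedding_def hom_on_def)

lemma embedding_subfield: "embedding K L \<sigma> \<Longrightarrow> is_subfield E \<Longrightarrow> K \<subseteq> E \<Longrightarrow> E \<subseteq> L \<Longrightarrow> embedding K E \<sigma>"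
  unfolding embedding_def hom_on_def by blast

lemma emb_into_self_onto:
  assumes fKL: "finite_ext K L" and e: "embedding K L \<sigma>" and into: "\<sigma> ` L \<subseteq> L"
  shows "\<sigma> ` L = L"
proof -
  have K: "is_subfield K" and L: "is_subfield L" and KsL: "K \<subseteq> L" using fKL by (auto simp: finite_ext_def)
  interpret embedding K L \<sigma> by (rule e)
  obtain B where B: "is_basis K L B" "ext_degree K L = card B" using finite_ext_obtain_basis[OF fKL] by blast
  have fB: "finite B" "B \<subseteq> L" "lin_indep_over K B" "span_over K B = L" using B by (auto simp: is_basis_def)
  have injB: "inj_on \<sigma> B" using inj_on_emb fB(2) inj_on_subset by blast
  have ind: "lin_indep_fam_over K \<sigma> B" unfolding lin_indep_fam_over_def
  proof (intro allI impI ballI)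
    fix c b assume c: "(\<forall>b\<in>B. c b \<in> K) \<and> (\<Sum>b\<in>B. c b * \<sigma> b) = 0" and b: "b \<in> B"
    have "\<sigma> (\<Sum>b\<in>B. c b * b) = \<sigma> 0"
      using c fB(2) emb_lin_comb[of B c id] emb_0 by auto
    then have "(\<Sum>b\<in>B. c b * b) = 0"
      using inj_onD[OF inj_on_emb] subfield_0[OF L] subfield_sum[OF L, of B "\<lambda>b. c b * b"]
        subfield_mult[OF L] c fB(2) KsL by blast
    then show "c b = 0" using lin_indep_overD[OF fB(3), of c b] c b by blast
  qed
  have SB: "lin_indep_over K (\<sigma> ` B)" using lin_indep_over_image_iff[OF injB] ind by simp
  have cardSB: "card (\<sigma> ` B) = ext_degree K L" using card_image[OF injB] B by simp
  have SBL: "\<sigma> ` B \<subseteq> L" using into fB(2) by blast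
  have "L \<subseteq> span_over K (\<sigma> ` B)"
  proof
    fix x assume x: "x \<in> L"
    show "x \<in> span_over K (\<sigma> ` B)"
    proof (rule ccontr)
      assume nx: "x \<notin> span_over K (\<sigma> ` B)"
      have "x \<notin> \<sigma> ` B" using nx span_fam_over_generator[OF K, of "\<sigma> ` B" x id] fB(1) by (auto simp: span_over_conv_fam)
      then have "card (insert x (\<sigma> ` B)) = Suc (card (\<sigma> ` B))" using fB(1) by simp
      moreover have "lin_indep_over K (insert x (\<sigma> ` B))" using lin_indep_over_insert[OF K _ SB nx] fB(1) by simp
      ultimately show False using card_lin_indep_le_ext_degree[OF fKL, of "insert x (\<sigma> ` B)"] x SBL fB(1) cardSB by simp
    qed
  qed
  moreover have "span_over K (\<sigma> ` B) \<subseteq> \<sigma> ` L"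
  proof
    fix y assume "y \<in> span_over K (\<sigma> ` B)"
    then have "y \<in> span_fam_over K \<sigma> B" using span_over_image[OF injB] by simp
    then obtain c where c: "\<And>b. b \<in> B \<Longrightarrow> c b \<in> K" "y = (\<Sum>b\<in>B. c b * \<sigma> b)" using span_fam_overE by metis
    have "\<sigma> (\<Sum>b\<in>B. c b * b) = y" using c fB(2) emb_lin_comb[of B c id] by auto
    moreover have "(\<Sum>b\<in>B. c b * b) \<in> L"
      using c fB(2) KsL by (auto intro!: subfield_sum[OF L] subfield_mult[OF L])
    ultimately show "y \<in> \<sigma> ` L" by blast
  qed
  ultimately show ?thesis using into by blast
qed

section \<open>Polynomials over a subfield\<close>

definition poly_over :: "'a::field set \<Rightarrow> 'a poly \<Rightarrow> bool" where
  "poly_over E p \<longleftrightarrow> (\<forall>i. coeff p i \<in> E)"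

lemma poly_overD: "poly_over E p \<Longrightarrow> coeff p i \<in> E" by (simp add: poly_over_def)

context fixes E :: "'a::field set" assumes E: "is_subfield E"
begin
lemma poly_over_0: "poly_over E 0" by (simp add: poly_over_def subfield_0[OF E])
lemma poly_over_1: "poly_over E 1" by (simp add: poly_over_def coeff_1 subfield_0[OF E] subfield_1[OF E])
lemma poly_over_const: "c \<in> E \<Longrightarrow> poly_over E [:c:]" by (simp add: poly_over_def coeff_pCons subfield_0[OF E] split: nat.splits)
lemma poly_over_pCons: "c \<in> E \<Longrightarrow> poly_over E p \<Longrightarrow> poly_over E (pCons c p)"
  by (simp add: poly_over_def coeff_pCons split: nat.splits)
lemma poly_over_pCons_iff: "poly_over E (pCons c p) \<longleftrightarrow> c \<in> E \<and> poly_over E p"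
  unfolding poly_over_def by (metis coeff_pCons_0 coeff_pCons_Suc not0_implies_Suc coeff_pCons)
lemma poly_over_add: "poly_over E p \<Longrightarrow> poly_over E q \<Longrightarrow> poly_over E (p + q)"
  by (simp add: poly_over_def subfield_add[OF E])
lemma poly_over_uminus: "poly_over E p \<Longrightarrow> poly_over E (- p)"
  by (simp add: poly_over_def subfield_uminus[OF E])
lemma poly_over_diff: "poly_over E p \<Longrightarrow> poly_over E q \<Longrightarrow> poly_over E (p - q)"
  by (simp add: poly_over_def subfield_diff[OF E])
lemma poly_over_smult: "c \<in> E \<Longrightarrow> poly_over E p \<Longrightarrow> poly_over E (smult c p)"
  by (simp add: poly_over_def subfield_mult[OF E])
lemma poly_over_mult: "poly_over E p \<Longrightarrow> poly_over E q \<Longrightarrow> poly_over E (p * q)"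
  unfolding poly_over_def coeff_mult by (auto intro!: subfield_sum[OF E] subfield_mult[OF E])
lemma poly_over_monom: "c \<in> E \<Longrightarrow> poly_over E (monom c n)"
  by (simp add: poly_over_def coeff_monom subfield_0[OF E])
lemma poly_over_prod: "(\<And>i. i \<in> A \<Longrightarrow> poly_over E (f i)) \<Longrightarrow> poly_over E (prod f A)"
  by (induction A rule: infinite_finite_induct) (auto simp: poly_over_1 poly_over_mult)
lemma poly_over_X: "poly_over E [:0, 1:]"
  by (intro poly_over_pCons poly_over_const subfield_0[OF E] subfield_1[OF E])
lemma poly_in_subfield:
  assumes "poly_over E p" "is_subfield R" "E \<subseteq> R" "x \<in> R"
  shows "poly p x \<in> R"
  using assms(1)
proof (induction p)
  case (pCons a p)
  then show ?case using assms(2-4) by (auto simp: poly_over_pCons_iff intro!: subfield_add subfield_mult)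
qed (simp add: subfield_0 assms)
end

lemma poly_over_mono: "poly_over E p \<Longrightarrow> E \<subseteq> F \<Longrightarrow> poly_over F p"
  by (auto simp: poly_over_def)

context embedding
begin

lemma coeff_emb_map_poly: "coeff (map_poly \<sigma> p) n = \<sigma> (coeff p n)"
  by (simp add: coeff_map_poly emb_0)

lemma emb_map_poly_add: "poly_over L p \<Longrightarrow> poly_over L q \<Longrightarrow> map_poly \<sigma> (p + q) = map_poly \<sigma> p + map_poly \<sigma> q"
  by (intro poly_eqI) (simp add: coeff_emb_map_poly emb_add poly_overD)

lemma emb_map_poly_diff: "poly_over L p \<Longrightarrow> poly_over L q \<Longrightarrow> map_poly \<sigma> (p - q) = map_poly \<sigma> p - map_poly \<sigma> q"
  by (intro poly_eqI) (simp add: coeff_emb_map_poly emb_diff poly_overD)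

lemma emb_map_poly_mult: "poly_over L p \<Longrightarrow> poly_over L q \<Longrightarrow> map_poly \<sigma> (p * q) = map_poly \<sigma> p * map_poly \<sigma> q"
proof (intro poly_eqI)
  fix n assume p: "poly_over L p" and q: "poly_over L q"
  have "coeff (map_poly \<sigma> (p * q)) n = \<sigma> (\<Sum>i\<le>n. coeff p i * coeff q (n - i))"
    by (simp add: coeff_emb_map_poly coeff_mult)
  also have "\<dots> = (\<Sum>i\<le>n. \<sigma> (coeff p i * coeff q (n - i)))"
    by (rule emb_sum) (intro subfield_mult[OF L] poly_overD[OF p] poly_overD[OF q])
  also have "\<dots> = coeff (map_poly \<sigma> p * map_poly \<sigma> q) n"
    by (simp add: coeff_mult coeff_emb_map_poly emb_mult poly_overD[OF p] poly_overD[OF q])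
  finally show "coeff (map_poly \<sigma> (p * q)) n = coeff (map_poly \<sigma> p * map_poly \<sigma> q) n" .
qed

lemma emb_map_poly_const: "map_poly \<sigma> [:c:] = [:\<sigma> c:]"
  by (intro poly_eqI) (simp add: coeff_emb_map_poly coeff_pCons emb_0 split: nat.splits)

lemma emb_map_poly_X: "map_poly \<sigma> [:0, 1:] = [:0, 1:]"
  by (intro poly_eqI) (simp add: coeff_emb_map_poly coeff_pCons emb_0 emb_1 split: nat.splits)

lemma emb_map_poly_fixed: "poly_over K p \<Longrightarrow> map_poly \<sigma> p = p"
  by (intro poly_eqI) (simp add: coeff_emb_map_poly emb_fix poly_overD)

lemma emb_poly: "poly_over L p \<Longrightarrow> x \<in> L \<Longrightarrow> \<sigma> (poly p x) = poly (map_poly \<sigma> p) (\<sigma> x)"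
proof (induction p)
  case 0 then show ?case by (simp add: emb_0)
next
  case (pCons a p)
  have a: "a \<in> L" and p: "poly_over L p" using pCons.prems poly_over_pCons_iff[OF L] by auto
  have "\<sigma> (poly (pCons a p) x) = \<sigma> a + \<sigma> x * \<sigma> (poly p x)"
    using emb_add emb_mult a p pCons.prems(2) poly_in_subfield[OF L p L] by (simp add: subfield_mult[OF L])
  then show ?case using pCons.IH[OF p pCons.prems(2)] by (simp add: map_poly_pCons emb_0)
qed

lemma degree_emb_map_poly_le: "degree (map_poly \<sigma> p) \<le> degree p"
  by (rule degree_le) (simp add: coeff_emb_map_poly coeff_eq_0 emb_0)

lemma emb_map_poly_monic: "poly_over L p \<Longrightarrow> lead_coeff p = 1 \<Longrightarrow> degree (map_poly \<sigma> p) = degree p \<and> lead_coeff (map_poly \<sigma> p) = 1"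
proof -
  assume p: "poly_over L p" "lead_coeff p = 1"
  have "coeff (map_poly \<sigma> p) (degree p) = 1" by (simp add: coeff_emb_map_poly p emb_1)
  then have "degree p \<le> degree (map_poly \<sigma> p)" by (intro le_degree) simp
  then have "degree (map_poly \<sigma> p) = degree p" using degree_emb_map_poly_le by (simp add: le_antisym)
  then show ?thesis by (simp add: coeff_emb_map_poly p emb_1)
qed


lemma emb_map_poly_prod:
  "(\<And>i. i \<in> A \<Longrightarrow> poly_over L (f i)) \<Longrightarrow> map_poly \<sigma> (prod f A) = (\<Prod>i\<in>A. map_poly \<sigma> (f i))"
proof (induction A rule: infinite_finite_induct)
  case (infinite A) then show ?case using emb_1 by simp
next
  case empty then show ?case using emb_1 by simp
next
  case (insert a A)
  have "map_poly \<sigma> (prod f (insert a A)) = map_poly \<sigma> (f a * prod f A)" using insert.hyps by simp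
  also have "\<dots> = map_poly \<sigma> (f a) * map_poly \<sigma> (prod f A)"
    using insert.prems poly_over_prod[OF L, of A f] by (intro emb_map_poly_mult) auto
  finally show ?case using insert by simp
qed

lemma emb_map_poly_linear: "x \<in> L \<Longrightarrow> map_poly \<sigma> [:- x, 1:] = [:- \<sigma> x, 1:]"
  by (simp add: map_poly_pCons emb_0 emb_uminus emb_1)

end

lemma poly_over_div_mod_monic:
  assumes E: "is_subfield E" and m: "poly_over E m" "lead_coeff m = 1"
  shows "poly_over E q \<Longrightarrow> \<exists>s r. poly_over E s \<and> poly_over E r \<and> q = m * s + r \<and> (r = 0 \<or> degree r < degree m)"
proof (induction "degree q" arbitrary: q rule: less_induct)
  case less
  show ?case
  proof (cases "q = 0 \<or> degree q < degree m")
    case True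
    then show ?thesis using less.prems by (intro exI[of _ 0] exI[of _ q]) (auto simp: poly_over_0[OF E])
  next
    case False
    then have q0: "q \<noteq> 0" and dq: "degree m \<le> degree q" by auto
    define c where "c = lead_coeff q"
    define k where "k = degree q - degree m"
    define q' where "q' = q - monom c k * m"
    have m0: "m \<noteq> 0" using m by auto
    have c0: "c \<noteq> 0" using q0 by (simp add: c_def)
    have cE: "c \<in> E" using less.prems by (simp add: c_def poly_overD)
    have q'E: "poly_over E q'" unfolding q'_def using less.prems m cE
      by (intro poly_over_diff[OF E] poly_over_mult[OF E] poly_over_monom[OF E])
    have deg_mm: "degree (monom c k * m) = degree q"
      using c0 m0 dq by (simp add: degree_mult_eq degree_monom_eq k_def)
    have "coeff (monom c k * m) (degree q) = c"
      using dq m by (simp add: coeff_monom_mult k_def)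
    then have top: "coeff q' (degree q) = 0" by (simp add: q'_def c_def)
    have dle: "degree q' \<le> degree q" unfolding q'_def using deg_mm by (intro degree_diff_le) auto
    show ?thesis
    proof (cases "q' = 0")
      case True
      then have "q = m * monom c k + 0" by (simp add: q'_def mult.commute)
      then show ?thesis using cE by (intro exI[of _ "monom c k"] exI[of _ 0]) (auto simp: poly_over_monom[OF E] poly_over_0[OF E])
    next
      case False
      have "degree q' \<noteq> degree q" using top False by (metis leading_coeff_0_iff)
      then have "degree q' < degree q" using dle by simp
      from less.hyps[OF this q'E] obtain s r where sr: "poly_over E s" "poly_over E r" "q' = m * s + r"
        "r = 0 \<or> degree r < degree m" by blast
      have "q = m * (s + monom c k) + r" using sr(3) by (simp add: q'_def algebra_simps)
      then show ?thesis using sr cE by (intro exI[of _ "s + monom c k"] exI[of _ r])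
          (auto simp: poly_over_add[OF E] poly_over_monom[OF E])
    qed
  qed
qed

definition alg_over :: "'a::field set \<Rightarrow> 'a \<Rightarrow> bool" where
  "alg_over E x \<longleftrightarrow> (\<exists>p. p \<noteq> 0 \<and> poly_over E p \<and> poly p x = 0)"

lemma minimal_poly_exists:
  assumes E: "is_subfield E" and a: "alg_over E \<alpha>"
  shows "\<exists>m. poly_over E m \<and> lead_coeff m = 1 \<and> poly m \<alpha> = 0 \<and> degree m \<ge> 1 \<and>
    (\<forall>q. poly_over E q \<and> poly q \<alpha> = 0 \<longrightarrow> (\<exists>s. poly_over E s \<and> q = m * s))"
proof -
  let ?S = "{p. p \<noteq> 0 \<and> poly_over E p \<and> poly p \<alpha> = 0}"
  have ne: "\<exists>p. p \<in> ?S" using a by (simp add: alg_over_def)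
  define n where "n = (LEAST n. \<exists>p\<in>?S. degree p = n)"
  have "\<exists>p\<in>?S. degree p = n" unfolding n_def
  proof (rule LeastI_ex)
    show "\<exists>n. \<exists>p\<in>?S. degree p = n" using ne by blast
  qed
  then obtain p where p: "p \<in> ?S" "degree p = n" by blast
  have least: "n \<le> degree q" if "q \<in> ?S" for q unfolding n_def using that by (intro Least_le) auto
  define m where "m = smult (inverse (lead_coeff p)) p"
  have lc: "lead_coeff p \<noteq> 0" using p(1) by simp
  have mE: "poly_over E m" unfolding m_def using p lc
    by (intro poly_over_smult[OF E] subfield_inverse[OF E] poly_overD) auto
  have mlc: "lead_coeff m = 1" unfolding m_def using lc by simp
  have mr: "poly m \<alpha> = 0" unfolding m_def using p by simp
  have dm: "degree m = n" unfolding m_def using p lc by simp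
  have m0: "m \<noteq> 0" using mlc by auto
  have d1: "degree m \<ge> 1"
  proof (rule ccontr)
    assume "\<not> degree m \<ge> 1"
    then have "degree m = 0" by simp
    then have "m = [:1:]" using mlc by (metis degree0_coeffs coeff_pCons_0)
    then show False using mr by simp
  qed
  have "\<forall>q. poly_over E q \<and> poly q \<alpha> = 0 \<longrightarrow> (\<exists>s. poly_over E s \<and> q = m * s)"
  proof (intro allI impI)
    fix q assume q: "poly_over E q \<and> poly q \<alpha> = 0"
    obtain s r where sr: "poly_over E s" "poly_over E r" "q = m * s + r" "r = 0 \<or> degree r < degree m"
      using poly_over_div_mod_monic[OF E mE mlc] q by blast
    have "poly r \<alpha> = 0" using sr(3) q mr by simp
    have "r = 0"
    proof (rule ccontr)
      assume "r \<noteq> 0"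
      then have "r \<in> ?S" using sr(2) \<open>poly r \<alpha> = 0\<close> by simp
      then show False using least[of r] sr(4) dm \<open>r \<noteq> 0\<close> by simp
    qed
    then show "\<exists>s. poly_over E s \<and> q = m * s" using sr by auto
  qed
  then show ?thesis using mE mlc mr d1 by blast
qed

section \<open>Extending embeddings inside an algebraic closure\<close>

definition is_subring :: "'a::field set \<Rightarrow> bool" where
  "is_subring R \<longleftrightarrow> 0 \<in> R \<and> 1 \<in> R \<and> (\<forall>x\<in>R. \<forall>y\<in>R. x + y \<in> R \<and> x * y \<in> R) \<and> (\<forall>x\<in>R. - x \<in> R)"

lemma poly_in_subring:
  assumes "poly_over E p" "is_subring R" "E \<subseteq> R" "x \<in> R"
  shows "poly p x \<in> R"
  using assms(1)
proof (induction p)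
  case (pCons a p)
  have "a \<in> E" "poly_over E p" using pCons.prems unfolding poly_over_def
    by (metis coeff_pCons_0, metis coeff_pCons_Suc)
  then show ?case using pCons.IH assms(2-4) by (auto simp: is_subring_def)
qed (use assms in \<open>simp add: is_subring_def\<close>)

locale alg_closed_ambient =
  fixes K :: "'a::field set"
  assumes alg_cl: "is_alg_closure_of K"
begin

lemma K: "is_subfield K" using alg_cl by (simp add: is_alg_closure_of_def)

lemma poly_has_root: "degree (p::'a poly) > 0 \<Longrightarrow> \<exists>x. poly p x = 0"
  using alg_cl unfolding is_alg_closure_of_def by blast

lemma alg_over_K: "alg_over K x"
  using alg_cl by (auto simp: is_alg_closure_of_def alg_over_def poly_over_def)

lemma alg_over_superfield: "K \<subseteq> E \<Longrightarrow> alg_over E x"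
proof -
  assume KE: "K \<subseteq> E"
  obtain p where "p \<noteq> 0" "poly_over K p" "poly p x = 0" using alg_over_K[of x] by (auto simp: alg_over_def)
  then show ?thesis using poly_over_mono[OF _ KE] unfolding alg_over_def by blast
qed

text \<open>Every \<open>y \<noteq> 0\<close> is a root of some \<open>a + X q\<close> over \<open>K\<close> with \<open>a \<noteq> 0\<close>, and then
  \<open>inverse y = - q(y) / a\<close>.\<close>

lemma subring_subfield:
  assumes R: "is_subring R" and KR: "K \<subseteq> R"
  shows "is_subfield R"
proof -
  have inv: "inverse y \<in> R" if y: "y \<in> R" "y \<noteq> 0" for y
  proof -
    have "\<forall>p. p \<noteq> 0 \<and> poly_over K p \<and> poly p y = 0 \<longrightarrow> inverse y \<in> R"
    proof (intro allI)
      fix p show "p \<noteq> 0 \<and> poly_over K p \<and> poly p y = 0 \<longrightarrow> inverse y \<in> R"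
      proof (induction p)
        case 0 then show ?case by simp
      next
        case (pCons a q)
        show ?case
        proof
          assume h: "pCons a q \<noteq> 0 \<and> poly_over K (pCons a q) \<and> poly (pCons a q) y = 0"
          have aK: "a \<in> K" and qK: "poly_over K q" using h poly_over_pCons_iff[OF K] by auto
          show "inverse y \<in> R"
          proof (cases "a = 0")
            case True
            then have "q \<noteq> 0" "poly q y = 0" using h y by auto
            then show ?thesis using pCons.IH qK by blast
          next
            case False
            have "y * poly q y = - a" using h by (simp add: eq_neg_iff_add_eq_0 add.commute)
            then have "inverse y = poly q y * (- inverse a)" using False y
              by (simp add: field_simps)
            moreover have "poly q y \<in> R" using poly_in_subring[OF qK R KR y(1)] .
            moreover have "- inverse a \<in> R" using KR aK subfield_uminus[OF K] subfield_inverse[OF K] by auto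
            ultimately show ?thesis using R unfolding is_subring_def by metis
          qed
        qed
      qed
    qed
    then show ?thesis using alg_over_K[of y] by (auto simp: alg_over_def)
  qed
  show ?thesis using R inv unfolding is_subring_def is_subfield_def by auto
qed

end

definition adjoin :: "'a::field set \<Rightarrow> 'a \<Rightarrow> 'a set" where
  "adjoin E \<alpha> = {poly p \<alpha> | p. poly_over E p}"

lemma adjoin_subring:
  assumes E: "is_subfield E" shows "is_subring (adjoin E \<alpha>)"
  unfolding is_subring_def adjoin_def
proof (intro conjI ballI)
  show "0 \<in> {poly p \<alpha> |p. poly_over E p}" using poly_over_0[OF E] by force
  show "1 \<in> {poly p \<alpha> |p. poly_over E p}" using poly_over_1[OF E] by force
  fix x y assume "x \<in> {poly p \<alpha> |p. poly_over E p}" "y \<in> {poly p \<alpha> |p. poly_over E p}"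
  then obtain p q where pq: "poly_over E p" "poly_over E q" "x = poly p \<alpha>" "y = poly q \<alpha>" by blast
  show "x + y \<in> {poly p \<alpha> |p. poly_over E p}" using pq poly_over_add[OF E pq(1,2)]
    by (intro CollectI exI[of _ "p + q"]) simp
  show "x * y \<in> {poly p \<alpha> |p. poly_over E p}" using pq poly_over_mult[OF E pq(1,2)]
    by (intro CollectI exI[of _ "p * q"]) simp
next
  fix x assume "x \<in> {poly p \<alpha> |p. poly_over E p}"
  then obtain p where p: "poly_over E p" "x = poly p \<alpha>" by blast
  show "- x \<in> {poly p \<alpha> |p. poly_over E p}" using p poly_over_uminus[OF E p(1)]
    by (intro CollectI exI[of _ "- p"]) simp
qed

lemma adjoin_base: "is_subfield E \<Longrightarrow> x \<in> E \<Longrightarrow> x \<in> adjoin E \<alpha>"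
  unfolding adjoin_def by (intro CollectI exI[of _ "[:x:]"]) (simp add: poly_over_const)

lemma adjoin_generator: "is_subfield E \<Longrightarrow> \<alpha> \<in> adjoin E \<alpha>"
  unfolding adjoin_def by (intro CollectI exI[of _ "[:0, 1:]"]) (simp add: poly_over_X)

context alg_closed_ambient
begin

lemma adjoin_subfield: "is_subfield E \<Longrightarrow> K \<subseteq> E \<Longrightarrow> is_subfield (adjoin E \<alpha>)"
  using subring_subfield adjoin_subring adjoin_base by blast

lemma emb_root_exists:
  assumes E: "is_subfield E" "K \<subseteq> E" and t: "embedding K E \<tau>"
  shows "\<exists>\<beta>. \<forall>q. poly_over E q \<and> poly q \<alpha> = 0 \<longrightarrow> poly (map_poly \<tau> q) \<beta> = 0"
proof -
  interpret embedding K E \<tau> by (rule t)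
  obtain m where m: "poly_over E m" "lead_coeff m = 1" "poly m \<alpha> = 0" "degree m \<ge> 1"
    "\<And>q. poly_over E q \<Longrightarrow> poly q \<alpha> = 0 \<Longrightarrow> \<exists>s. poly_over E s \<and> q = m * s"
    using minimal_poly_exists[OF E(1) alg_over_superfield[OF E(2)]] by blast
  have "degree (map_poly \<tau> m) > 0" using emb_map_poly_monic[OF m(1,2)] m(4) by simp
  then obtain \<beta> where \<beta>: "poly (map_poly \<tau> m) \<beta> = 0" using poly_has_root by blast
  show ?thesis
  proof (intro exI allI impI)
    fix q assume q: "poly_over E q \<and> poly q \<alpha> = 0"
    then obtain s where s: "poly_over E s" "q = m * s" using m(5) by blast
    then show "poly (map_poly \<tau> q) \<beta> = 0" using emb_map_poly_mult[OF m(1) s(1)] \<beta> by simp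
  qed
qed

text \<open>\<open>p(\<alpha>) \<mapsto> (\<tau> p)(\<beta>)\<close> is well defined because \<open>\<beta>\<close> is a root of \<open>\<tau> q\<close> whenever
  \<open>q(\<alpha>) = 0\<close>.\<close>

lemma emb_extend_adjoin:
  assumes E: "is_subfield E" "K \<subseteq> E" and t: "embedding K E \<tau>"
    and \<beta>: "\<And>q. poly_over E q \<Longrightarrow> poly q \<alpha> = 0 \<Longrightarrow> poly (map_poly \<tau> q) \<beta> = 0"
  shows "\<exists>\<tau>'. embedding K (adjoin E \<alpha>) \<tau>' \<and> (\<forall>x\<in>E. \<tau>' x = \<tau> x) \<and> \<tau>' \<alpha> = \<beta>"
proof -
  interpret embedding K E \<tau> by (rule t)
  define \<tau>' where "\<tau>' = (\<lambda>y. poly (map_poly \<tau> (SOME p. poly_over E p \<and> poly p \<alpha> = y)) \<beta>)"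
  have key: "\<tau>' (poly p \<alpha>) = poly (map_poly \<tau> p) \<beta>" if p: "poly_over E p" for p
  proof -
    define p' where "p' = (SOME p'. poly_over E p' \<and> poly p' \<alpha> = poly p \<alpha>)"
    have p': "poly_over E p' \<and> poly p' \<alpha> = poly p \<alpha>" unfolding p'_def
      by (rule someI[of "\<lambda>p'. poly_over E p' \<and> poly p' \<alpha> = poly p \<alpha>" p]) (simp add: p)
    have r: "poly_over E (p' - p)" "poly (p' - p) \<alpha> = 0" using p' p poly_over_diff[OF E(1)] by auto
    have "poly (map_poly \<tau> (p' - p)) \<beta> = 0" using \<beta>[OF r] .
    then have "poly (map_poly \<tau> p') \<beta> = poly (map_poly \<tau> p) \<beta>" using emb_map_poly_diff[of p' p] p' p by simp
    then show ?thesis unfolding \<tau>'_def p'_def[symmetric] by simp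
  qed
  have AS: "is_subfield (adjoin E \<alpha>)" using adjoin_subfield[OF E] .
  have hom: "hom_on (adjoin E \<alpha>) \<tau>'" unfolding hom_on_def
  proof (intro ballI conjI)
    fix x y assume "x \<in> adjoin E \<alpha>" "y \<in> adjoin E \<alpha>"
    then obtain p q where pq: "poly_over E p" "poly_over E q" "x = poly p \<alpha>" "y = poly q \<alpha>"
      unfolding adjoin_def by blast
    have "\<tau>' (x + y) = \<tau>' (poly (p + q) \<alpha>)" using pq by simp
    also have "\<dots> = poly (map_poly \<tau> (p + q)) \<beta>" using key poly_over_add[OF E(1) pq(1,2)] by blast
    also have "\<dots> = \<tau>' x + \<tau>' y" using emb_map_poly_add[OF pq(1,2)] key pq by simp
    finally show "\<tau>' (x + y) = \<tau>' x + \<tau>' y" .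
    have "\<tau>' (x * y) = \<tau>' (poly (p * q) \<alpha>)" using pq by simp
    also have "\<dots> = poly (map_poly \<tau> (p * q)) \<beta>" using key poly_over_mult[OF E(1) pq(1,2)] by blast
    also have "\<dots> = \<tau>' x * \<tau>' y" using emb_map_poly_mult[OF pq(1,2)] key pq by simp
    finally show "\<tau>' (x * y) = \<tau>' x * \<tau>' y" .
  qed
  have agree: "\<tau>' x = \<tau> x" if x: "x \<in> E" for x
  proof -
    have "\<tau>' x = \<tau>' (poly [:x:] \<alpha>)" by simp
    also have "\<dots> = \<tau> x" using key[OF poly_over_const[OF E(1) x]] emb_map_poly_const by simp
    finally show ?thesis .
  qed
  have fixK: "\<forall>x\<in>K. \<tau>' x = x" using agree emb_fix E(2) by auto
  have "\<tau>' \<alpha> = \<tau>' (poly [:0, 1:] \<alpha>)" by simp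
  also have "\<dots> = \<beta>" using key[OF poly_over_X[OF E(1)]] emb_map_poly_X by simp
  finally have ab: "\<tau>' \<alpha> = \<beta>" .
  have "embedding K (adjoin E \<alpha>) \<tau>'" unfolding embedding_def
    using K AS hom fixK E(2) adjoin_base[OF E(1)] by blast
  then show ?thesis using agree ab by blast
qed

lemma emb_extend_finite:
  assumes E: "is_subfield E" "K \<subseteq> E" and t: "embedding K E \<tau>" and S: "finite S"
  shows "\<exists>R \<tau>'. is_subfield R \<and> E \<subseteq> R \<and> S \<subseteq> R \<and> embedding K R \<tau>' \<and> (\<forall>x\<in>E. \<tau>' x = \<tau> x)"
  using S
proof (induction S rule: finite_induct)
  case empty
  then show ?case using E t by blast
next
  case (insert a S)
  then obtain R \<tau>' where R: "is_subfield R" "E \<subseteq> R" "S \<subseteq> R" "embedding K R \<tau>'" "\<forall>x\<in>E. \<tau>' x = \<tau> x"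
    by blast
  have KR: "K \<subseteq> R" using R E by blast
  obtain \<beta> where \<beta>: "\<And>q. poly_over R q \<Longrightarrow> poly q a = 0 \<Longrightarrow> poly (map_poly \<tau>' q) \<beta> = 0"
    using emb_root_exists[OF R(1) KR R(4), of a] by blast
  obtain \<tau>'' where t'': "embedding K (adjoin R a) \<tau>''" "\<forall>x\<in>R. \<tau>'' x = \<tau>' x"
    using emb_extend_adjoin[OF R(1) KR R(4) \<beta>] by blast
  have "R \<subseteq> adjoin R a" using adjoin_base[OF R(1)] by blast
  moreover have "a \<in> adjoin R a" using adjoin_generator[OF R(1)] .
  ultimately show ?case using adjoin_subfield[OF R(1) KR] t'' R by (intro exI[of _ "adjoin R a"] exI[of _ \<tau>'']) auto
qed

lemma emb_extend:
  assumes E: "is_subfield E" "K \<subseteq> E" and t: "embedding K E \<tau>" and E': "finite_ext K E'"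
  shows "\<exists>\<tau>'. embedding K E' \<tau>' \<and> (\<forall>x\<in>E. \<tau>' x = \<tau> x)"
proof -
  obtain B where B: "is_basis K E' B" using E' unfolding finite_ext_def by blast
  obtain R \<tau>' where R: "is_subfield R" "E \<subseteq> R" "B \<subseteq> R" "embedding K R \<tau>'" "\<forall>x\<in>E. \<tau>' x = \<tau> x"
    using emb_extend_finite[OF E t, of B] B by (auto simp: is_basis_def)
  have "E' = span_fam_over K id B" using B by (simp add: is_basis_def span_over_conv_fam)
  also have "\<dots> \<subseteq> R" using R E by (intro span_fam_over_subset) auto
  finally have "E' \<subseteq> R" .
  then have "embedding K E' \<tau>'" using embedding_subfield[OF R(4)] E' by (auto simp: finite_ext_def)
  then show ?thesis using R(5) by blast
qed

end

section \<open>Perfect fields\<close>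

lemma diff_power_CHAR_power:
  assumes p: "prime CHAR('b::comm_ring_1)"
  shows "(x - y :: 'b) ^ (CHAR('b) ^ a) = x ^ (CHAR('b) ^ a) - y ^ (CHAR('b) ^ a)"
proof -
  have neg: "(- y) ^ (CHAR('b) ^ a) = - (y ^ (CHAR('b) ^ a))" for y :: 'b
  proof (induction a)
    case 0 then show ?case by simp
  next
    case (Suc a)
    have "(- y) ^ (CHAR('b) ^ Suc a) = ((- y) ^ (CHAR('b) ^ a)) ^ CHAR('b)"
      by (simp add: power_mult[symmetric] mult.commute)
    also have "\<dots> = (- (y ^ (CHAR('b) ^ a))) ^ CHAR('b)" using Suc by simp
    also have "\<dots> = - ((y ^ (CHAR('b) ^ a)) ^ CHAR('b))" using minus_power_prime_CHAR[OF refl p] by simp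
    also have "\<dots> = - (y ^ (CHAR('b) ^ Suc a))" by (simp add: power_mult[symmetric] mult.commute)
    finally show ?case .
  qed
  have "(x - y) ^ (CHAR('b) ^ a) = (x + (- y)) ^ (CHAR('b) ^ a)" by simp
  also have "\<dots> = x ^ (CHAR('b) ^ a) + (- y) ^ (CHAR('b) ^ a)" by (rule freshmans_dream'[OF p refl])
  finally show ?thesis using neg by simp
qed

lemma linear_power_CHAR_power:
  assumes p: "prime CHAR('a::field)"
  shows "[:- x, 1:] ^ (CHAR('a) ^ a) = monom 1 (CHAR('a) ^ a) - [:x ^ (CHAR('a) ^ a) :: 'a:]"
proof -
  have "prime CHAR('a poly)" using p by simp
  moreover have "[:- x, 1:] = monom 1 1 - [:x:]" by (simp add: monom_Suc monom_0 algebra_simps)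
  ultimately show ?thesis
    using diff_power_CHAR_power[of "monom 1 1" "[:x:]" a] by (simp add: monom_power poly_const_pow)
qed

lemma coeff_monom_minus_const_power:
  fixes c :: "'a::field"
  assumes q: "q \<ge> 1"
  shows "coeff ((monom 1 q - [:c:]) ^ j) (q * j) = 1 \<and> degree ((monom 1 q - [:c:]) ^ j) \<le> q * j"
proof (induction j)
  case 0 then show ?case by simp
next
  case (Suc j)
  let ?A = "monom 1 q - [:c:] :: 'a poly"
  let ?P = "?A ^ j"
  have e: "?A ^ Suc j = monom 1 q * ?P - smult c ?P" by (simp add: algebra_simps)
  have dA: "degree ?A \<le> q" by (intro degree_diff_le) (auto simp: degree_monom_le)
  have "degree (?A ^ Suc j) \<le> q * Suc j"
  proof -
    have "degree (?A ^ Suc j) \<le> degree ?A + degree ?P" by (simp add: degree_mult_le)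
    also have "\<dots> \<le> q + q * j" using dA Suc by simp
    finally show ?thesis by simp
  qed
  moreover have "coeff (?A ^ Suc j) (q * Suc j) = 1"
  proof -
    have "coeff ?P (q * Suc j) = 0" using Suc q by (intro coeff_eq_0) simp
    then show ?thesis using Suc unfolding e by (simp add: coeff_monom_mult)
  qed
  ultimately show ?case by simp
qed

lemma coeff_monom_minus_const_power_Suc:
  fixes c :: "'a::field"
  assumes q: "q \<ge> 1"
  shows "coeff ((monom 1 q - [:c:]) ^ Suc j) (q * j) = - of_nat (Suc j) * c"
proof (induction j)
  case 0 then show ?case using q by (simp add: coeff_monom)
next
  case (Suc j)
  let ?A = "monom 1 q - [:c:] :: 'a poly"
  let ?P = "?A ^ Suc j"
  have e: "?A ^ Suc (Suc j) = monom 1 q * ?P - smult c ?P" by (simp add: algebra_simps)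
  have "coeff ?P (q * Suc j) = 1" using coeff_monom_minus_const_power[OF q] by blast
  moreover have "coeff (monom 1 q * ?P) (q * Suc j) = coeff ?P (q * j)"
    using q by (simp add: coeff_monom_mult)
  ultimately have "coeff (?A ^ Suc (Suc j)) (q * Suc j) = - of_nat (Suc j) * c - c"
    unfolding e using Suc by simp
  then show ?case by (simp add: algebra_simps)
qed

lemma perfect_field_CHAR_power_root:
  assumes P: "perfect_field K" and c: "CHAR('a::field) \<noteq> 0" and y: "(y::'a) \<in> K"
  shows "\<exists>z\<in>K. z ^ (CHAR('a) ^ a) = y"
proof (induction a)
  case 0 then show ?case using y by auto
next
  case (Suc a)
  then obtain z where z: "z \<in> K" "z ^ (CHAR('a) ^ a) = y" by blast
  then obtain w where w: "w \<in> K" "w ^ CHAR('a) = z" using P c unfolding perfect_field_def by blast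
  have "w ^ (CHAR('a) ^ Suc a) = (w ^ CHAR('a)) ^ (CHAR('a) ^ a)" by (simp add: power_mult[symmetric])
  then show ?case using w z by auto
qed

lemma in_perfect_field_if_CHAR_power_in:
  assumes P: "perfect_field K" and p: "prime CHAR('a::field)" and x: "(x::'a) ^ (CHAR('a) ^ a) \<in> K"
  shows "x \<in> K"
proof -
  obtain z where z: "z \<in> K" "z ^ (CHAR('a) ^ a) = x ^ (CHAR('a) ^ a)"
    using perfect_field_CHAR_power_root[OF P _ x] p by (metis prime_gt_0_nat less_irrefl)
  have "(x - z) ^ (CHAR('a) ^ a) = 0" using diff_power_CHAR_power[OF p, of x z a] z by simp
  then show ?thesis using z by simp
qed

text \<open>Write \<open>n = q m\<close> with \<open>q\<close> a power of \<open>p = CHAR('a)\<close> and \<open>p\<close> not dividing \<open>m\<close>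
  (\<open>q = 1\<close> in characteristic \<open>0\<close>). Then \<open>(X - x)^n = (X^q - x^q)^m\<close>, whose coefficient of
  \<open>X^(q(m - 1))\<close> is \<open>-m x^q\<close>; so \<open>x^q \<in> K\<close>, and perfectness gives \<open>x \<in> K\<close>.\<close>

lemma in_subfield_if_linear_power_over:
  assumes K: "is_subfield K" and P: "perfect_field K" and n: "n \<ge> 1"
    and pin: "poly_over K ([:- x, 1:] ^ n)"
  shows "(x::'a::field) \<in> K"
proof -
  define a where "a = multiplicity CHAR('a) n"
  define q where "q = CHAR('a) ^ a"
  obtain m where nm: "n = q * m" and m: "\<not> CHAR('a) dvd m"
    using multiplicity_decompose'[of n "CHAR('a)"] n unfolding a_def q_def by auto
  have char: "prime CHAR('a)" if "a \<noteq> 0"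
  proof -
    have "CHAR('a) \<noteq> 0"
    proof
      assume "CHAR('a) = 0"
      then have "q = 0" using that by (simp add: q_def)
      then show False using nm n by simp
    qed
    then show ?thesis using prime_CHAR_semidom by blast
  qed
  have Xq: "[:- x, 1:] ^ q = monom 1 q - [:x ^ q:]"
  proof (cases "a = 0")
    case True then show ?thesis by (simp add: q_def monom_Suc monom_0 algebra_simps)
  next
    case False then show ?thesis using linear_power_CHAR_power[OF char] by (simp add: q_def)
  qed
  have q1: "q \<ge> 1" using nm n by (cases "q = 0") auto
  obtain j where j: "m = Suc j" using nm n by (cases m) auto
  have "[:- x, 1:] ^ n = ([:- x, 1:] ^ q) ^ m" using nm by (simp add: power_mult)
  then have "[:- x, 1:] ^ n = (monom 1 q - [:x ^ q:]) ^ Suc j" using j Xq by simp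
  then have "coeff ([:- x, 1:] ^ n) (q * j) = - of_nat m * x ^ q"
    using coeff_monom_minus_const_power_Suc[OF q1, of "x ^ q" j] j by simp
  then have "- of_nat m * x ^ q \<in> K" using pin by (metis poly_overD)
  moreover have "(of_nat m :: 'a) \<noteq> 0" using m by (simp add: of_nat_eq_0_iff_char_dvd)
  ultimately have xq: "x ^ q \<in> K"
    using subfield_divide[OF K _ subfield_uminus[OF K subfield_of_nat[OF K, of m]]]
    by (metis nonzero_mult_div_cancel_left neg_0_equal_iff_equal minus_mult_left)
  show ?thesis
  proof (cases "a = 0")
    case True then show ?thesis using xq by (simp add: q_def)
  next
    case False then show ?thesis using in_perfect_field_if_CHAR_power_in[OF P char xq[unfolded q_def]] by simp
  qed
qed

context alg_closed_ambient
begin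

lemma monic_eq_power_if_single_root:
  fixes m :: "'a poly"
  shows "lead_coeff m = 1 \<Longrightarrow> (\<forall>\<beta>. poly m \<beta> = 0 \<longrightarrow> \<beta> = x) \<Longrightarrow> m = [:- x, 1:] ^ degree m"
proof (induction "degree m" arbitrary: m)
  case 0
  then show ?case by (metis degree0_coeffs coeff_pCons_0 power_0 one_pCons)
next
  case (Suc d)
  obtain \<beta> where \<beta>: "poly m \<beta> = 0" using poly_has_root[of m] Suc.hyps(2) by auto
  then have "\<beta> = x" using Suc.prems by blast
  then obtain r where r: "m = [:- x, 1:] * r" using \<beta> poly_eq_0_iff_dvd by blast
  have r0: "r \<noteq> 0" using r Suc.prems(1) by auto
  have "degree ([:- x, 1:] * r) = degree [:- x, 1:] + degree r" by (rule degree_mult_eq) (use r0 in auto)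
  then have dr: "degree r = d" using Suc.hyps(2) r by simp
  have "lead_coeff ([:- x, 1:] * r) = lead_coeff [:- x, 1:] * lead_coeff r" by (rule lead_coeff_mult)
  then have lr: "lead_coeff r = 1" using r Suc.prems(1) by (simp del: mult_pCons_left)
  have roots: "\<forall>\<beta>. poly r \<beta> = 0 \<longrightarrow> \<beta> = x"
  proof (intro allI impI)
    fix \<gamma> assume "poly r \<gamma> = 0"
    then have "poly m \<gamma> = 0" unfolding r by (simp only: poly_mult mult_zero_right)
    then show "\<gamma> = x" using Suc.prems(2) by blast
  qed
  have "r = [:- x, 1:] ^ d" using Suc.hyps(1)[of r] dr lr roots by blast
  then have "m = [:- x, 1:] ^ Suc d" using r by (simp only: power_Suc)
  then show ?case using Suc.hyps(2) by metis
qed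

end

section \<open>Automorphisms, Dedekind's lemma and Artin's bound\<close>

definition normal :: "'a::field set \<Rightarrow> 'a set \<Rightarrow> bool" where
  "normal K E \<longleftrightarrow> (\<forall>\<tau>. embedding K E \<tau> \<longrightarrow> \<tau> ` E \<subseteq> E)"

definition id_outside :: "('a \<Rightarrow> 'a) \<Rightarrow> 'a set \<Rightarrow> 'a \<Rightarrow> 'a" where
  "id_outside \<sigma> E = (\<lambda>x. if x \<in> E then \<sigma> x else x)"

lemma id_outside_apply: "x \<in> E \<Longrightarrow> id_outside \<sigma> E x = \<sigma> x"
  by (simp add: id_outside_def)

definition aut_stable_part :: "'a::field set \<Rightarrow> 'a set \<Rightarrow> 'a set \<Rightarrow> 'a set" where
  "aut_stable_part K N L = {y \<in> L. \<forall>\<tau>\<in>K_auts K N. \<tau> y \<in> L}"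

definition fixed_field :: "'a::field set \<Rightarrow> 'a set \<Rightarrow> 'a set" where
  "fixed_field K E = {x \<in> E. \<forall>\<sigma>\<in>K_auts K E. \<sigma> x = x}"

lemma K_auts_iff:
  assumes K: "is_subfield K" and E: "is_subfield E" and KE: "K \<subseteq> E"
  shows "\<sigma> \<in> K_auts K E \<longleftrightarrow> embedding K E \<sigma> \<and> \<sigma> ` E = E \<and> (\<forall>x. x \<notin> E \<longrightarrow> \<sigma> x = x)"
proof
  assume s: "\<sigma> \<in> K_auts K E"
  then have "embedding K E \<sigma>" using K E KE unfolding K_auts_def embedding_def hom_on_def by blast
  then show "embedding K E \<sigma> \<and> \<sigma> ` E = E \<and> (\<forall>x. x \<notin> E \<longrightarrow> \<sigma> x = x)"
    using s unfolding K_auts_def bij_betw_def by blast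
next
  assume s: "embedding K E \<sigma> \<and> \<sigma> ` E = E \<and> (\<forall>x. x \<notin> E \<longrightarrow> \<sigma> x = x)"
  then have "inj_on \<sigma> E" using embedding.inj_on_emb by blast
  then show "\<sigma> \<in> K_auts K E" using s unfolding K_auts_def bij_betw_def embedding_def hom_on_def by blast
qed

lemma embedding_id_outside: "embedding K E \<tau> \<Longrightarrow> embedding K E (id_outside \<tau> E)"
  unfolding embedding_def hom_on_def id_outside_def by (auto simp: subfield_add subfield_mult)

lemma id_outside_in_K_auts:
  assumes KE: "finite_ext K E" and t: "embedding K E \<tau>" and into: "\<tau> ` E \<subseteq> E"
  shows "id_outside \<tau> E \<in> K_auts K E"
proof -
  have K: "is_subfield K" and E: "is_subfield E" and KsE: "K \<subseteq> E" using KE by (auto simp: finite_ext_def)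
  have t': "embedding K E (id_outside \<tau> E)" by (rule embedding_id_outside[OF t])
  have eq: "id_outside \<tau> E ` E = \<tau> ` E" by (auto simp: id_outside_def)
  have "id_outside \<tau> E ` E = E" using emb_into_self_onto[OF KE _ ] t' into eq by blast
  then show ?thesis using K_auts_iff[OF K E KsE] t' by (auto simp: id_outside_def)
qed

lemma normal_id_outside_in_K_auts:
  assumes KE: "finite_ext K E" and N: "normal K E" and t: "embedding K E \<tau>"
  shows "id_outside \<tau> E \<in> K_auts K E"
  using id_outside_in_K_auts[OF KE t] N t by (auto simp: normal_def)

text \<open>Substituting \<open>y x\<close> for \<open>x\<close> in a relation \<open>\<Sum>\<tau>. c \<tau> * \<tau> x = 0\<close> and subtracting
  \<open>\<tau>\<^sub>0 y\<close> times the relation eliminates the term of \<open>\<tau>\<^sub>0\<close>.\<close>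

lemma dedekind_eliminate:
  assumes E: "is_subfield E" and y: "y \<in> E"
    and hom: "\<And>\<tau>. \<tau> \<in> insert \<tau>0 T \<Longrightarrow> hom_on E \<tau>"
    and rel: "\<And>x. x \<in> E \<Longrightarrow> c \<tau>0 * \<tau>0 x + (\<Sum>\<tau>\<in>T. c \<tau> * \<tau> x) = 0"
  shows "\<forall>x\<in>E. (\<Sum>\<tau>\<in>T. (c \<tau> * (\<tau> y - \<tau>0 y)) * \<tau> x) = 0"
proof
  fix x assume x: "x \<in> E"
  have m: "\<tau> (y * x) = \<tau> y * \<tau> x" if "\<tau> \<in> insert \<tau>0 T" for \<tau>
    using hom[OF that] y x by (simp add: hom_on_def)
  have "(\<Sum>\<tau>\<in>T. (c \<tau> * (\<tau> y - \<tau>0 y)) * \<tau> x)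
      = (\<Sum>\<tau>\<in>T. c \<tau> * (\<tau> y * \<tau> x)) - \<tau>0 y * (\<Sum>\<tau>\<in>T. c \<tau> * \<tau> x)"
    by (simp add: algebra_simps sum_subtractf sum_distrib_left)
  also have "(\<Sum>\<tau>\<in>T. c \<tau> * (\<tau> y * \<tau> x)) = (\<Sum>\<tau>\<in>T. c \<tau> * \<tau> (y * x))"
    using m by (intro sum.cong) auto
  also have "(\<Sum>\<tau>\<in>T. c \<tau> * \<tau> (y * x)) - \<tau>0 y * (\<Sum>\<tau>\<in>T. c \<tau> * \<tau> x)
      = - (c \<tau>0 * \<tau>0 (y * x)) + \<tau>0 y * (c \<tau>0 * \<tau>0 x)"
  proof -
    have "(\<Sum>\<tau>\<in>T. c \<tau> * \<tau> (y * x)) = - (c \<tau>0 * \<tau>0 (y * x))"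
      using rel[OF subfield_mult[OF E y x]] by (simp add: add_eq_0_iff)
    moreover have "(\<Sum>\<tau>\<in>T. c \<tau> * \<tau> x) = - (c \<tau>0 * \<tau>0 x)"
      using rel[OF x] by (simp add: add_eq_0_iff)
    ultimately show ?thesis by simp
  qed
  also have "\<dots> = 0" using m[of \<tau>0] by (simp add: algebra_simps)
  finally show "(\<Sum>\<tau>\<in>T. (c \<tau> * (\<tau> y - \<tau>0 y)) * \<tau> x) = 0" .
qed

lemma dedekind_lemma:
  assumes E: "is_subfield E" and T: "finite T"
    and hom: "\<And>\<tau>. \<tau> \<in> T \<Longrightarrow> hom_on E \<tau> \<and> \<tau> 1 = 1"
    and dist: "\<And>\<tau> \<tau>'. \<tau> \<in> T \<Longrightarrow> \<tau>' \<in> T \<Longrightarrow> \<tau> \<noteq> \<tau>' \<Longrightarrow> \<exists>y\<in>E. \<tau> y \<noteq> \<tau>' y"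
    and rel: "\<forall>x\<in>E. (\<Sum>\<tau>\<in>T. c \<tau> * \<tau> x) = 0"
  shows "\<forall>\<tau>\<in>T. c \<tau> = 0"
  using T hom dist rel
proof (induction T arbitrary: c rule: finite_induct)
  case empty then show ?case by simp
next
  case (insert \<tau>0 T)
  have rel0: "c \<tau>0 * \<tau>0 x + (\<Sum>\<tau>\<in>T. c \<tau> * \<tau> x) = 0" if "x \<in> E" for x
    using insert.prems(3) insert.hyps that by simp
  have cT: "c \<tau> = 0" if t: "\<tau> \<in> T" for \<tau>
  proof -
    have "\<tau> \<noteq> \<tau>0" using insert.hyps t by auto
    then obtain y where y: "y \<in> E" "\<tau> y \<noteq> \<tau>0 y" using insert.prems(2)[of \<tau> \<tau>0] t by auto
    have "\<forall>\<tau>\<in>T. c \<tau> * (\<tau> y - \<tau>0 y) = 0"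
      using dedekind_eliminate[OF E y(1) _ rel0] insert.prems(1)
      by (intro insert.IH) (auto simp: insert.prems(2))
    then show "c \<tau> = 0" using y(2) t by auto
  qed
  have "c \<tau>0 * \<tau>0 1 = 0" using rel0[OF subfield_1[OF E]] cT by simp
  then show ?case using cT insert.prems(1)[of \<tau>0] by auto
qed

lemma card_embeddings_le_ext_degree_finite:
  assumes KE: "finite_ext K E" and T: "finite T" and e: "\<And>\<tau>. \<tau> \<in> T \<Longrightarrow> embedding K E \<tau>"
    and dist: "\<And>\<tau> \<tau>'. \<tau> \<in> T \<Longrightarrow> \<tau>' \<in> T \<Longrightarrow> \<tau> \<noteq> \<tau>' \<Longrightarrow> \<exists>y\<in>E. \<tau> y \<noteq> \<tau>' y"
  shows "card T \<le> ext_degree K E"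
proof (rule ccontr)
  assume "\<not> card T \<le> ext_degree K E"
  then have lt: "ext_degree K E < card T" by simp
  obtain B where B: "is_basis K E B" "ext_degree K E = card B" using finite_ext_obtain_basis[OF KE] by blast
  have fB: "finite B" "B \<subseteq> E" "span_over K B = E" using B by (auto simp: is_basis_def)
  obtain x where x: "\<exists>\<tau>\<in>T. x \<tau> \<noteq> 0" "\<forall>b\<in>B. (\<Sum>\<tau>\<in>T. \<tau> b * x \<tau>) = 0"
    using homogeneous_system_solvable[where a="\<lambda>b \<tau>. \<tau> b", OF subfield_UNIV fB(1) T] lt B(2) by auto
  have "\<forall>\<tau>\<in>T. x \<tau> = 0"
  proof (rule dedekind_lemma[OF _ T])
    show "is_subfield E" using KE by (simp add: finite_ext_def)
    show "hom_on E \<tau> \<and> \<tau> 1 = 1" if "\<tau> \<in> T" for \<tau>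
      using e[OF that] embedding.emb_1[OF e[OF that]] unfolding embedding_def by blast
    show "\<And>\<tau> \<tau>'. \<tau> \<in> T \<Longrightarrow> \<tau>' \<in> T \<Longrightarrow> \<tau> \<noteq> \<tau>' \<Longrightarrow> \<exists>y\<in>E. \<tau> y \<noteq> \<tau>' y" by (rule dist)
    show "\<forall>y\<in>E. (\<Sum>\<tau>\<in>T. x \<tau> * \<tau> y) = 0"
    proof
      fix y assume "y \<in> E"
      then obtain k where k: "\<And>b. b \<in> B \<Longrightarrow> k b \<in> K" "y = (\<Sum>b\<in>B. k b * b)"
        using fB(3) span_overE by metis
      have "(\<Sum>\<tau>\<in>T. x \<tau> * \<tau> y) = (\<Sum>\<tau>\<in>T. x \<tau> * (\<Sum>b\<in>B. k b * \<tau> b))"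
        using embedding.emb_lin_comb[OF e, of _ B k id] k fB(2) by (intro sum.cong) auto
      also have "\<dots> = (\<Sum>b\<in>B. k b * (\<Sum>\<tau>\<in>T. \<tau> b * x \<tau>))"
        by (simp add: sum_distrib_left mult_ac sum.swap[of _ T])
      also have "\<dots> = 0" using x(2) by simp
      finally show "(\<Sum>\<tau>\<in>T. x \<tau> * \<tau> y) = 0" .
    qed
  qed
  then show False using x(1) by blast
qed

lemma card_embeddings_le_ext_degree:
  assumes KE: "finite_ext K E" and e: "\<And>\<tau>. \<tau> \<in> T \<Longrightarrow> embedding K E \<tau>"
    and dist: "\<And>\<tau> \<tau>'. \<tau> \<in> T \<Longrightarrow> \<tau>' \<in> T \<Longrightarrow> \<tau> \<noteq> \<tau>' \<Longrightarrow> \<exists>y\<in>E. \<tau> y \<noteq> \<tau>' y"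
  shows "finite T \<and> card T \<le> ext_degree K E"
proof -
  have "finite T"
  proof (rule ccontr)
    assume "infinite T"
    then obtain S where S: "finite S" "card S = Suc (ext_degree K E)" "S \<subseteq> T"
      using infinite_arbitrarily_large by blast
    have "card S \<le> ext_degree K E"
    proof (rule card_embeddings_le_ext_degree_finite[OF KE S(1)])
      fix \<tau> assume "\<tau> \<in> S" then show "embedding K E \<tau>" using S(3) e by blast
    next
      fix \<tau> \<tau>' assume "\<tau> \<in> S" "\<tau>' \<in> S" "\<tau> \<noteq> \<tau>'"
      then show "\<exists>y\<in>E. \<tau> y \<noteq> \<tau>' y" using S(3) dist by blast
    qed
    then show False using S(2) by simp
  qed
  then show ?thesis using card_embeddings_le_ext_degree_finite[OF KE _ e dist] by blast
qed

lemma inj_K_aut: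
  assumes K: "is_subfield K" and E: "is_subfield E" and KE: "K \<subseteq> E" and s: "\<sigma> \<in> K_auts K E"
  shows "inj \<sigma>"
proof (rule injI)
  fix x y assume xy: "\<sigma> x = \<sigma> y"
  have A: "embedding K E \<sigma>" "\<sigma> ` E = E" "\<forall>x. x \<notin> E \<longrightarrow> \<sigma> x = x" using K_auts_iff[OF K E KE] s by auto
  show "x = y"
  proof (cases "x \<in> E"; cases "y \<in> E")
    assume "x \<in> E" "y \<in> E" then show ?thesis using embedding.inj_on_emb[OF A(1)] xy by (auto dest: inj_onD)
  next
    assume "x \<in> E" "y \<notin> E" then show ?thesis using A xy by force
  next
    assume "x \<notin> E" "y \<in> E" then show ?thesis using A xy by force
  next
    assume "x \<notin> E" "y \<notin> E" then show ?thesis using A xy by force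
  qed
qed

lemma K_auts_differ:
  assumes "\<sigma> \<in> K_auts K E" "\<sigma>' \<in> K_auts K E" "\<sigma> \<noteq> \<sigma>'"
  shows "\<exists>y\<in>E. \<sigma> y \<noteq> \<sigma>' y"
proof (rule ccontr)
  assume "\<not> (\<exists>y\<in>E. \<sigma> y \<noteq> \<sigma>' y)"
  then have "\<sigma> x = \<sigma>' x" for x using assms(1,2) by (cases "x \<in> E") (auto simp: K_auts_def)
  then show False using assms(3) by auto
qed

lemma card_K_auts_le:
  assumes KE: "finite_ext K E"
  shows "finite (K_auts K E) \<and> card (K_auts K E) \<le> ext_degree K E"
proof -
  have K: "is_subfield K" and E: "is_subfield E" and KsE: "K \<subseteq> E" using KE by (auto simp: finite_ext_def)
  have e: "\<And>\<tau>. \<tau> \<in> K_auts K E \<Longrightarrow> embedding K E \<tau>" by (rule K_auts_iff[OF K E KsE, THEN iffD1, THEN conjunct1])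
  have d: "\<And>\<tau> \<tau>'. \<tau> \<in> K_auts K E \<Longrightarrow> \<tau>' \<in> K_auts K E \<Longrightarrow> \<tau> \<noteq> \<tau>' \<Longrightarrow> \<exists>y\<in>E. \<tau> y \<noteq> \<tau>' y"
    by (rule K_auts_differ)
  show ?thesis by (rule card_embeddings_le_ext_degree[OF KE e d])
qed

lemma id_in_K_auts: "is_subfield K \<Longrightarrow> is_subfield E \<Longrightarrow> K \<subseteq> E \<Longrightarrow> id \<in> K_auts K E"
  by (auto simp: K_auts_def)

lemma comp_in_K_auts:
  assumes s: "\<sigma> \<in> K_auts K E" and r: "\<rho> \<in> K_auts K E"
  shows "\<sigma> \<circ> \<rho> \<in> K_auts K E"
proof -
  have s': "bij_betw \<sigma> E E" "\<forall>x\<in>E. \<forall>y\<in>E. \<sigma> (x + y) = \<sigma> x + \<sigma> y \<and> \<sigma> (x * y) = \<sigma> x * \<sigma> y"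
    "\<forall>x\<in>K. \<sigma> x = x" "\<forall>x. x \<notin> E \<longrightarrow> \<sigma> x = x" using s unfolding K_auts_def by blast+
  have r': "bij_betw \<rho> E E" "\<forall>x\<in>E. \<forall>y\<in>E. \<rho> (x + y) = \<rho> x + \<rho> y \<and> \<rho> (x * y) = \<rho> x * \<rho> y"
    "\<forall>x\<in>K. \<rho> x = x" "\<forall>x. x \<notin> E \<longrightarrow> \<rho> x = x" using r unfolding K_auts_def by blast+
  have rE: "\<forall>x\<in>E. \<rho> x \<in> E" using r'(1) by (auto simp: bij_betw_def)
  have b: "bij_betw (\<sigma> \<circ> \<rho>) E E" using bij_betw_trans[OF r'(1) s'(1)] .
  show ?thesis unfolding K_auts_def using b s'(2-4) r'(2-4) rE by auto
qed

lemma inj_on_comp_K_aut: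
  assumes "is_subfield K" "is_subfield E" "K \<subseteq> E" "\<sigma> \<in> K_auts K E"
  shows "inj_on (\<lambda>\<rho>. \<sigma> \<circ> \<rho>) A"
proof (rule inj_onI)
  fix \<rho> \<rho>' assume "\<sigma> \<circ> \<rho> = \<sigma> \<circ> \<rho>'"
  then have "\<And>x. \<sigma> (\<rho> x) = \<sigma> (\<rho>' x)" by (metis comp_apply)
  then show "\<rho> = \<rho>'" using inj_K_aut[OF assms] by (auto simp: inj_def)
qed

lemma K_auts_comp_left_image:
  assumes KE: "finite_ext K E" and s: "\<sigma> \<in> K_auts K E"
  shows "(\<lambda>\<rho>. \<sigma> \<circ> \<rho>) ` K_auts K E = K_auts K E"
proof -
  have K: "is_subfield K" and E: "is_subfield E" and KsE: "K \<subseteq> E" using KE by (auto simp: finite_ext_def)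
  have fin: "finite (K_auts K E)" using card_K_auts_le[OF KE] by blast
  have sub: "(\<lambda>\<rho>. \<sigma> \<circ> \<rho>) ` K_auts K E \<subseteq> K_auts K E" using comp_in_K_auts[OF s] by blast
  show ?thesis using card_subset_eq[OF fin sub] card_image[OF inj_on_comp_K_aut[OF K E KsE s, where A="K_auts K E"]] by simp
qed

lemma K_auts_left_divide:
  assumes KE: "finite_ext K E" and s: "\<rho> \<in> K_auts K E" "\<sigma> \<in> K_auts K E"
  shows "\<exists>\<sigma>'\<in>K_auts K E. \<sigma> = \<rho> \<circ> \<sigma>'"
  using K_auts_comp_left_image[OF KE s(1)] s(2) by (metis imageE)

lemma K_autsD:
  assumes KE: "finite_ext K E" and s: "\<sigma> \<in> K_auts K E"
  shows "embedding K E \<sigma>" "\<sigma> ` E = E" "\<And>x. x \<notin> E \<Longrightarrow> \<sigma> x = x"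
proof -
  have K: "is_subfield K" and E: "is_subfield E" and KsE: "K \<subseteq> E" using KE by (auto simp: finite_ext_def)
  show "embedding K E \<sigma>" "\<sigma> ` E = E" "\<And>x. x \<notin> E \<Longrightarrow> \<sigma> x = x"
    using K_auts_iff[OF K E KsE, of \<sigma>] s by auto
qed

lemma fixed_field_intermediate:
  assumes KE: "finite_ext K E"
  shows "is_subfield (fixed_field K E) \<and> K \<subseteq> fixed_field K E \<and> fixed_field K E \<subseteq> E"
proof -
  have K: "is_subfield K" and E: "is_subfield E" and KsE: "K \<subseteq> E" using KE by (auto simp: finite_ext_def)
  have H: "\<And>\<sigma>. \<sigma> \<in> K_auts K E \<Longrightarrow> embedding K E \<sigma>" by (rule K_autsD(1)[OF KE])
  have "fixed_field K E = E \<inter> (\<Inter>\<sigma>\<in>K_auts K E. {x \<in> E. \<sigma> x = id x})"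
    by (auto simp: fixed_field_def)
  also have "is_subfield \<dots>"
    using embedding.subfield_equalizer[OF H embedding_id[OF K E KsE]] by (intro subfield_Int_INT[OF E])
  finally have "is_subfield (fixed_field K E)" .
  moreover have "K \<subseteq> fixed_field K E" unfolding fixed_field_def using KsE embedding.emb_fix[OF H] by blast
  ultimately show ?thesis by (auto simp: fixed_field_def)
qed

lemma K_aut_maps_aut_system_solution:
  assumes KE: "finite_ext K E" and r: "\<rho> \<in> K_auts K E" and s: "\<sigma> \<in> K_auts K E"
    and W: "W \<subseteq> E" and yE: "\<And>w. w \<in> W \<Longrightarrow> y w \<in> E"
    and yS: "\<And>\<sigma>. \<sigma> \<in> K_auts K E \<Longrightarrow> (\<Sum>w\<in>W. \<sigma> w * y w) = 0"
  shows "(\<Sum>w\<in>W. \<sigma> w * \<rho> (y w)) = 0"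
proof -
  have E: "is_subfield E" using KE by (simp add: finite_ext_def)
  interpret r: embedding K E \<rho> using K_autsD(1)[OF KE r] .
  obtain \<sigma>' where s': "\<sigma>' \<in> K_auts K E" "\<sigma> = \<rho> \<circ> \<sigma>'" using K_auts_left_divide[OF KE r s] by blast
  have \<sigma>'E: "\<And>w. w \<in> W \<Longrightarrow> \<sigma>' w \<in> E" using K_autsD(2)[OF KE s'(1)] W by blast
  have "(\<Sum>w\<in>W. \<sigma> w * \<rho> (y w)) = (\<Sum>w\<in>W. \<rho> (\<sigma>' w * y w))"
    using s'(2) \<sigma>'E yE by (intro sum.cong) (auto simp: r.emb_mult)
  also have "\<dots> = \<rho> (\<Sum>w\<in>W. \<sigma>' w * y w)"
    using \<sigma>'E yE by (intro r.emb_sum[symmetric] subfield_mult[OF E])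
  also have "\<dots> = 0" using yS[OF s'(1)] r.emb_0 by simp
  finally show ?thesis .
qed

text \<open>If \<open>[E:E\<^sup>G] > |G|\<close>, take a basis \<open>W\<close> of \<open>E\<close> over the fixed field and a nonzero solution
  \<open>y\<close> of \<open>\<Sum>w\<in>W. \<sigma> w * y w = 0\<close> (\<open>\<sigma> \<in> G\<close>) of minimal support, normalised to \<open>y w\<^sub>0 = 1\<close>. For
  \<open>\<rho> \<in> G\<close>, \<open>y - \<rho> \<circ> y\<close> is a solution of smaller support, so \<open>y\<close> is fixed by \<open>G\<close>; the equation
  for \<open>\<sigma> = id\<close> then contradicts the independence of \<open>W\<close> over \<open>E\<^sup>G\<close>.\<close>

lemma artin_ext_degree_le:
  assumes KE: "finite_ext K E"
  shows "ext_degree (fixed_field K E) E \<le> card (K_auts K E)"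
proof -
  define F0 where "F0 = fixed_field K E"
  define G where "G = K_auts K E"
  have K: "is_subfield K" and E: "is_subfield E" and KsE: "K \<subseteq> E" using KE by (auto simp: finite_ext_def)
  have F0: "is_subfield F0" "K \<subseteq> F0" "F0 \<subseteq> E" using fixed_field_intermediate[OF KE] by (auto simp: F0_def)
  have F0E: "finite_ext F0 E" using finite_ext_upper[OF KE F0] .
  obtain W where W: "is_basis F0 E W" "ext_degree F0 E = card W" using finite_ext_obtain_basis[OF F0E] by blast
  have fW: "finite W" "W \<subseteq> E" "lin_indep_over F0 W" using W by (auto simp: is_basis_def)
  have fG: "finite G" using card_K_auts_le[OF KE] by (simp add: G_def)
  have idG: "id \<in> G" using id_in_K_auts[OF K E KsE] by (simp add: G_def)
  have GE: "\<And>\<sigma> w. \<sigma> \<in> G \<Longrightarrow> w \<in> E \<Longrightarrow> \<sigma> w \<in> E" using K_autsD(2)[OF KE] by (auto simp: G_def)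
  have Gemb: "\<And>\<sigma>. \<sigma> \<in> G \<Longrightarrow> embedding K E \<sigma>" using K_autsD(1)[OF KE] by (simp add: G_def)
  show ?thesis unfolding F0_def[symmetric] G_def[symmetric] W(2)
  proof (rule ccontr)
    assume "\<not> card W \<le> card G"
    then have lt: "card G < card W" by simp
    define Sol where "Sol = (\<lambda>x. (\<forall>w\<in>W. x w \<in> E) \<and> (\<forall>\<sigma>\<in>G. (\<Sum>w\<in>W. \<sigma> w * x w) = 0))"
    define supp where "supp = (\<lambda>x. {w \<in> W. x w \<noteq> (0::'a)})"
    define P where "P = (\<lambda>x. Sol x \<and> supp x \<noteq> {})"
    obtain x0 where "(\<forall>w\<in>W. x0 w \<in> E) \<and> (\<exists>w\<in>W. x0 w \<noteq> 0) \<and> (\<forall>\<sigma>\<in>G. (\<Sum>w\<in>W. \<sigma> w * x0 w) = 0)"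
      using homogeneous_system_solvable[where a="\<lambda>\<sigma> w. \<sigma> w", OF E fG fW(1) lt] GE fW(2) by blast
    then have "P x0" by (auto simp: P_def Sol_def supp_def)
    then obtain x where x: "P x" and xmin: "\<And>y. P y \<Longrightarrow> card (supp x) \<le> card (supp y)"
      using ex_has_least_nat[of P x0 "\<lambda>x. card (supp x)"] by blast
    obtain w0 where w0: "w0 \<in> W" "x w0 \<noteq> 0" using x by (auto simp: P_def supp_def)
    define y where "y = (\<lambda>w. x w / x w0)"
    have yE: "\<And>w. w \<in> W \<Longrightarrow> y w \<in> E" using x w0 by (auto simp: y_def P_def Sol_def intro!: subfield_divide[OF E])
    have yS: "\<And>\<sigma>. \<sigma> \<in> G \<Longrightarrow> (\<Sum>w\<in>W. \<sigma> w * y w) = 0"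
    proof -
      fix \<sigma> assume "\<sigma> \<in> G"
      then have "(\<Sum>w\<in>W. \<sigma> w * x w) = 0" using x by (auto simp: P_def Sol_def)
      then show "(\<Sum>w\<in>W. \<sigma> w * y w) = 0" by (simp add: y_def sum_divide_distrib[symmetric] times_divide_eq_right)
    qed
    have supp_y: "supp y = supp x" using w0 by (auto simp: supp_def y_def)
    have yw0: "y w0 = 1" using w0 by (simp add: y_def)
    have fixed: "\<rho> (y w) = y w" if r: "\<rho> \<in> G" and w: "w \<in> W" for \<rho> w
    proof -
      interpret r: embedding K E \<rho> using Gemb[OF r] .
      define z where "z = (\<lambda>w. y w - \<rho> (y w))"
      have zE: "\<forall>w\<in>W. z w \<in> E" using yE GE[OF r] by (auto simp: z_def intro!: subfield_diff[OF E])
      have zS: "\<forall>\<sigma>\<in>G. (\<Sum>w\<in>W. \<sigma> w * z w) = 0"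
        using K_aut_maps_aut_system_solution[OF KE r[unfolded G_def] _ fW(2) yE] yS
        by (simp add: G_def z_def right_diff_distrib sum_subtractf)
      have "supp z \<subseteq> supp y - {w0}" "w0 \<in> supp y"
        using yw0 w0 r.emb_1 r.emb_0 by (auto simp: supp_def z_def)
      then have "card (supp z) < card (supp y)"
        using fW(1) by (intro psubset_card_mono) (auto simp: supp_def)
      then have "supp z = {}" using xmin[of z] zE zS supp_y by (auto simp: P_def Sol_def)
      then show ?thesis using w by (auto simp: supp_def z_def)
    qed
    have yF0: "\<And>w. w \<in> W \<Longrightarrow> y w \<in> F0" using yE fixed by (auto simp: F0_def fixed_field_def G_def)
    have "(\<Sum>w\<in>W. y w * w) = 0" using yS[OF idG] by (simp add: mult.commute)
    then have "y w0 = 0" using lin_indep_overD[OF fW(3), of y w0] yF0 w0 by blast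
    then show False using yw0 by simp
  qed
qed

section \<open>Galois extensions are the normal ones\<close>

lemma galois_fixed_field:
  assumes G: "galois K E"
  shows "fixed_field K E = K"
proof -
  have KE: "finite_ext K E" using G by (simp add: galois_def)
  have K: "is_subfield K" and E: "is_subfield E" and KsE: "K \<subseteq> E" using KE by (auto simp: finite_ext_def)
  have F0: "is_subfield (fixed_field K E)" "K \<subseteq> fixed_field K E" "fixed_field K E \<subseteq> E" using fixed_field_intermediate[OF KE] by auto
  have F0E: "finite_ext (fixed_field K E) E" using finite_ext_upper[OF KE F0] .
  have KF0: "finite_ext K (fixed_field K E)" using finite_ext_intermediate[OF KE F0] by simp
  have sub: "K_auts K E \<subseteq> K_auts (fixed_field K E) E" unfolding K_auts_def fixed_field_def by blast
  have "card (K_auts K E) \<le> card (K_auts (fixed_field K E) E)"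
    using card_K_auts_le[OF F0E] sub by (intro card_mono) auto
  also have "\<dots> \<le> ext_degree (fixed_field K E) E" using card_K_auts_le[OF F0E] by simp
  finally have le: "ext_degree K E \<le> ext_degree (fixed_field K E) E" using G by (simp add: galois_def)
  have tw: "ext_degree K E = ext_degree K (fixed_field K E) * ext_degree (fixed_field K E) E"
    using ext_degree_tower[OF KF0 F0E] by simp
  have p1: "ext_degree K (fixed_field K E) > 0" using ext_degree_pos[OF KF0] .
  have p2: "ext_degree (fixed_field K E) E > 0" using ext_degree_pos[OF F0E] .
  have "ext_degree K (fixed_field K E) = 1"
  proof (rule ccontr)
    assume "ext_degree K (fixed_field K E) \<noteq> 1"
    then have "ext_degree K (fixed_field K E) \<ge> 2" using p1 by simp
    then have "ext_degree K E \<ge> 2 * ext_degree (fixed_field K E) E" using tw by simp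
    then show False using le p2 by simp
  qed
  then show ?thesis using eq_if_ext_degree_1[OF KF0] by simp
qed

lemma orbit_poly_over_fixed_field:
  assumes KE: "finite_ext K E" and \<alpha>: "\<alpha> \<in> E"
  shows "poly_over (fixed_field K E) (\<Prod>\<sigma>\<in>K_auts K E. [:- \<sigma> \<alpha>, 1:])"
proof -
  define G where "G = K_auts K E"
  define p where "p = (\<Prod>\<sigma>\<in>G. [:- \<sigma> \<alpha>, 1:])"
  have K: "is_subfield K" and E: "is_subfield E" and KsE: "K \<subseteq> E" using KE by (auto simp: finite_ext_def)
  have GE: "\<And>\<sigma>. \<sigma> \<in> G \<Longrightarrow> \<sigma> \<alpha> \<in> E" using K_autsD(2)[OF KE] \<alpha> by (auto simp: G_def)
  have fac: "\<And>\<sigma>. \<sigma> \<in> G \<Longrightarrow> poly_over E [:- \<sigma> \<alpha>, 1:]"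
    using GE by (auto intro!: poly_over_pCons[OF E] poly_over_const[OF E] subfield_uminus[OF E] subfield_1[OF E])
  have pE: "poly_over E p" unfolding p_def by (rule poly_over_prod[OF E fac])
  have inv: "map_poly \<rho> p = p" if r: "\<rho> \<in> G" for \<rho>
  proof -
    interpret r: embedding K E \<rho> using K_autsD(1)[OF KE r[unfolded G_def]] .
    have "map_poly \<rho> p = (\<Prod>\<sigma>\<in>G. map_poly \<rho> [:- \<sigma> \<alpha>, 1:])"
      unfolding p_def by (rule r.emb_map_poly_prod[OF fac])
    also have "\<dots> = (\<Prod>\<sigma>\<in>G. [:- (\<rho> \<circ> \<sigma>) \<alpha>, 1:])"
      using GE by (intro prod.cong) (auto simp: r.emb_map_poly_linear)
    also have "\<dots> = (\<Prod>\<sigma>\<in>(\<lambda>\<sigma>. \<rho> \<circ> \<sigma>) ` G. [:- \<sigma> \<alpha>, 1:])"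
      using prod.reindex[OF inj_on_comp_K_aut[OF K E KsE r[unfolded G_def], where A=G], of "\<lambda>\<sigma>. [:- \<sigma> \<alpha>, 1:]"]
      by (simp add: o_def)
    also have "\<dots> = p" unfolding p_def G_def using K_auts_comp_left_image[OF KE r[unfolded G_def]] by simp
    finally show ?thesis .
  qed
  have "coeff p i \<in> fixed_field K E" for i
  proof -
    have "\<rho> (coeff p i) = coeff p i" if r: "\<rho> \<in> G" for \<rho>
    proof -
      have "coeff (map_poly \<rho> p) i = \<rho> (coeff p i)"
        using embedding.coeff_emb_map_poly[OF K_autsD(1)[OF KE r[unfolded G_def]]] .
      then show ?thesis using inv[OF r] by metis
    qed
    then show ?thesis using poly_overD[OF pE] unfolding fixed_field_def G_def by blast
  qed
  then show ?thesis unfolding poly_over_def p_def G_def by blast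
qed

lemma galois_imp_normal:
  assumes G: "galois K E"
  shows "normal K E"
  unfolding normal_def
proof (intro allI impI subsetI)
  fix \<tau> y assume t: "embedding K E \<tau>" and y: "y \<in> \<tau> ` E"
  then obtain \<alpha> where \<alpha>: "\<alpha> \<in> E" "y = \<tau> \<alpha>" by blast
  interpret t: embedding K E \<tau> by (rule t)
  have KE: "finite_ext K E" using G by (simp add: galois_def)
  define p where "p = (\<Prod>\<sigma>\<in>K_auts K E. [:- \<sigma> \<alpha>, 1:])"
  have pK: "poly_over K p"
    using orbit_poly_over_fixed_field[OF KE \<alpha>(1)] galois_fixed_field[OF G] by (simp add: p_def)
  have pE: "poly_over E p" using poly_over_mono[OF pK t.KL] .
  have fG: "finite (K_auts K E)" using card_K_auts_le[OF KE] by blast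
  have "poly p \<alpha> = 0"
    unfolding p_def poly_prod using fG id_in_K_auts[OF t.K t.L t.KL] by (intro prod_zero) (auto intro!: bexI[of _ id])
  then have "poly p (\<tau> \<alpha>) = 0"
    using t.emb_map_poly_fixed[OF pK] t.emb_poly[OF pE \<alpha>(1)] t.emb_0 by simp
  then obtain \<sigma> where "\<sigma> \<in> K_auts K E" "\<tau> \<alpha> = \<sigma> \<alpha>"
    using fG unfolding p_def poly_prod by (auto simp: prod_zero_iff)
  then show "y \<in> E" using \<alpha> K_autsD(2)[OF KE] by blast
qed

locale perfect_ambient = alg_closed_ambient +
  assumes perfect: "perfect_field K"
begin

text \<open>Every root \<open>\<beta>\<close> of the minimal polynomial of \<open>x\<close> is \<open>\<tau> x\<close> for a \<open>K\<close>-embedding \<open>\<tau>\<close> of \<open>E\<close>,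
  which by normality is an automorphism; so if \<open>x\<close> is fixed, the minimal polynomial is a power
  of \<open>X - x\<close>, and perfectness forces \<open>x \<in> K\<close>.\<close>

lemma normal_fixed_field:
  assumes KE: "finite_ext K E" and N: "normal K E"
  shows "fixed_field K E = K"
proof
  show "K \<subseteq> fixed_field K E" using fixed_field_intermediate[OF KE] by simp
  have Es: "is_subfield E" using KE by (simp add: finite_ext_def)
  show "fixed_field K E \<subseteq> K"
  proof
    fix x assume x: "x \<in> fixed_field K E"
    then have xE: "x \<in> E" by (simp add: fixed_field_def)
    obtain m where m: "poly_over K m" "lead_coeff m = 1" "poly m x = 0" "degree m \<ge> 1"
      "\<And>q. poly_over K q \<Longrightarrow> poly q x = 0 \<Longrightarrow> \<exists>s. poly_over K s \<and> q = m * s"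
      using minimal_poly_exists[OF K alg_over_K] by blast
    have roots: "\<forall>\<beta>. poly m \<beta> = 0 \<longrightarrow> \<beta> = x"
    proof (intro allI impI)
      fix \<beta> assume b: "poly m \<beta> = 0"
      have cond: "poly (map_poly id q) \<beta> = 0" if q: "poly_over K q" "poly q x = 0" for q
      proof -
        obtain s where "q = m * s" using m(5)[OF q] by blast
        then show ?thesis using b by simp
      qed
      obtain \<tau> where \<tau>: "embedding K (adjoin K x) \<tau>" "\<tau> x = \<beta>"
        using emb_extend_adjoin[OF K order_refl embedding_id[OF K K order_refl] cond] by blast
      have A: "is_subfield (adjoin K x)" "K \<subseteq> adjoin K x" using adjoin_subfield[OF K order_refl] adjoin_base[OF K] by auto
      obtain \<tau>' where \<tau>': "embedding K E \<tau>'" "\<forall>y\<in>adjoin K x. \<tau>' y = \<tau> y"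
        using emb_extend[OF A \<tau>(1) KE] by blast
      have "\<tau>' x = \<beta>" using \<tau>'(2) \<tau>(2) adjoin_generator[OF K] by auto
      have "id_outside \<tau>' E \<in> K_auts K E" by (rule normal_id_outside_in_K_auts[OF KE N \<tau>'(1)])
      then have "id_outside \<tau>' E x = x" using x by (simp add: fixed_field_def)
      then show "\<beta> = x" using xE \<open>\<tau>' x = \<beta>\<close> by (simp add: id_outside_def)
    qed
    have "m = [:- x, 1:] ^ degree m" using monic_eq_power_if_single_root[OF m(2) roots] .
    then have "poly_over K ([:- x, 1:] ^ degree m)" using m(1) by simp
    then show "x \<in> K" using in_subfield_if_linear_power_over[OF K perfect m(4)] by blast
  qed
qed

lemma normal_imp_galois:
  assumes KE: "finite_ext K E" and N: "normal K E"
  shows "galois K E"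
proof -
  have "ext_degree K E \<le> card (K_auts K E)" using artin_ext_degree_le[OF KE] normal_fixed_field[OF KE N] by simp
  moreover have "card (K_auts K E) \<le> ext_degree K E" using card_K_auts_le[OF KE] by simp
  ultimately show ?thesis using KE by (simp add: galois_def)
qed

lemma galois_iff_normal: "galois K E \<longleftrightarrow> finite_ext K E \<and> normal K E"
  using normal_imp_galois galois_imp_normal by (auto simp: galois_def)

end

section \<open>Composita\<close>

lemma compositum_least: "is_subfield S \<Longrightarrow> A \<subseteq> S \<Longrightarrow> B \<subseteq> S \<Longrightarrow> compositum A B \<subseteq> S"
  unfolding compositum_def by blast

lemma compositum_subfield: "is_subfield (compositum A B)"
  unfolding compositum_def is_subfield_def by blast

lemma compositum_upper: "A \<subseteq> compositum A B" "B \<subseteq> compositum A B"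
  unfolding compositum_def by blast+

lemma compositum_mono: "A \<subseteq> A' \<Longrightarrow> B \<subseteq> B' \<Longrightarrow> compositum A B \<subseteq> compositum A' B'"
  unfolding compositum_def by blast

lemma (in embedding) image_compositum_subset:
  assumes "compositum A B \<subseteq> L" "is_subfield T" "\<sigma> ` A \<subseteq> T" "\<sigma> ` B \<subseteq> T"
  shows "\<sigma> ` compositum A B \<subseteq> T"
proof -
  have "A \<subseteq> L" "B \<subseteq> L" using assms(1) compositum_upper by blast+
  then have "compositum A B \<subseteq> {x \<in> L. \<sigma> x \<in> T}"
    using assms(3,4) by (intro compositum_least subfield_preimage[OF assms(2)]) auto
  then show ?thesis by blast
qed

lemma (in embedding) eq_on_compositum:
  assumes "embedding K L \<tau>" "compositum A B \<subseteq> L" "\<forall>x\<in>A. \<sigma> x = \<tau> x" "\<forall>x\<in>B. \<sigma> x = \<tau> x"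
  shows "\<forall>x\<in>compositum A B. \<sigma> x = \<tau> x"
proof -
  have "A \<subseteq> L" "B \<subseteq> L" using assms(2) compositum_upper by blast+
  then have "compositum A B \<subseteq> {x \<in> L. \<sigma> x = \<tau> x}"
    using assms(3,4) by (intro compositum_least subfield_equalizer[OF assms(1)]) auto
  then show ?thesis by blast
qed

lemma subring_span_fam_over_basis:
  assumes A: "is_subfield A" "K \<subseteq> A" and BB: "is_basis K B BF" and B: "is_subfield B"
  shows "is_subring (span_fam_over A id BF)" "A \<subseteq> span_fam_over A id BF" "B \<subseteq> span_fam_over A id BF"
proof -
  have fBF: "finite BF" "BF \<subseteq> B" "span_over K BF = B" using BB by (auto simp: is_basis_def)
  define S where "S = span_fam_over A id BF"
  have BS: "B \<subseteq> S"
  proof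
    fix b assume "b \<in> B"
    then obtain k where k: "\<And>f. f \<in> BF \<Longrightarrow> k f \<in> K" "b = (\<Sum>f\<in>BF. k f * f)" using fBF(3) span_overE by metis
    show "b \<in> S" unfolding S_def by (rule span_fam_overI[of BF k]) (use k A in auto)
  qed
  have AS: "A \<subseteq> S"
  proof
    fix a assume a: "a \<in> A"
    have "1 \<in> S" using BS subfield_1[OF B] by blast
    then show "a \<in> S" using span_fam_over_scale[OF _ a A(1), of 1 id BF] by (simp add: S_def)
  qed
  have prodB: "a * b \<in> S" if "a \<in> A" "b \<in> B" for a b
    using span_fam_over_scale[OF _ that(1) A(1)] BS that(2) by (auto simp: S_def)
  have mult: "x * y \<in> S" if x: "x \<in> S" and y: "y \<in> S" for x y
  proof -
    obtain c where c: "\<And>f. f \<in> BF \<Longrightarrow> c f \<in> A" "x = (\<Sum>f\<in>BF. c f * id f)" using x span_fam_overE unfolding S_def by metis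
    obtain d where d: "\<And>f. f \<in> BF \<Longrightarrow> d f \<in> A" "y = (\<Sum>f\<in>BF. d f * id f)" using y span_fam_overE unfolding S_def by metis
    have "x * y = (\<Sum>f\<in>BF. \<Sum>g\<in>BF. (c f * d g) * (f * g))"
      unfolding c(2) d(2) by (simp add: sum_product mult_ac)
    also have "\<dots> \<in> S"
    proof -
      have elem: "(c f * d g) * (f * g) \<in> S" if "f \<in> BF" "g \<in> BF" for f g
        by (intro prodB subfield_mult[OF A(1)] subfield_mult[OF B] c(1) d(1)) (use that fBF(2) in auto)
      show ?thesis unfolding S_def
        by (intro span_fam_over_sum[OF A(1)]) (use elem in \<open>simp add: S_def\<close>)
    qed
    finally show ?thesis .
  qed
  show "is_subring (span_fam_over A id BF)" unfolding is_subring_def S_def[symmetric]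
  proof (intro conjI ballI)
    show "0 \<in> S" using span_fam_over_0[OF A(1)] by (simp add: S_def)
    show "1 \<in> S" using BS subfield_1[OF B] by blast
  next
    fix x y assume "x \<in> S" "y \<in> S"
    then show "x + y \<in> S" "x * y \<in> S" using span_fam_over_add[OF _ _ A(1)] mult by (auto simp: S_def)
  next
    fix x assume "x \<in> S"
    then show "- x \<in> S" using span_fam_over_scale[OF _ subfield_uminus[OF A(1) subfield_1[OF A(1)]] A(1), of x id BF]
      by (simp add: S_def)
  qed
  show "A \<subseteq> span_fam_over A id BF" "B \<subseteq> span_fam_over A id BF" using AS BS by (simp_all add: S_def)
qed

context alg_closed_ambient
begin

lemma compositum_eq_span_basis:
  assumes A: "is_subfield A" "K \<subseteq> A" and BB: "is_basis K B BF" and B: "is_subfield B"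
  shows "compositum A B = span_fam_over A id BF"
proof
  note S = subring_span_fam_over_basis[OF A BB B]
  have "is_subfield (span_fam_over A id BF)" using subring_subfield[OF S(1)] S(2) A(2) by blast
  then show "compositum A B \<subseteq> span_fam_over A id BF" using compositum_least S(2,3) by blast
  have "BF \<subseteq> B" using BB by (simp add: is_basis_def)
  then show "span_fam_over A id BF \<subseteq> compositum A B"
    using compositum_upper(1)[of A B] compositum_upper(2)[of B A] A(2)
    by (intro span_fam_over_subset[OF compositum_subfield]) auto
qed

lemma finite_ext_compositum:
  assumes A: "finite_ext K A" and B: "finite_ext K B"
  shows "finite_ext K (compositum A B)"
proof -
  obtain BF where BF: "is_basis K B BF" using B unfolding finite_ext_def by blast
  have As: "is_subfield A" "K \<subseteq> A" using A by (auto simp: finite_ext_def)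
  have Bs: "is_subfield B" using B by (auto simp: finite_ext_def)
  have eq: "compositum A B = span_fam_over A id BF" using compositum_eq_span_basis[OF As BF Bs] .
  have sub: "compositum A B \<subseteq> span_fam_over A id BF" using eq by simp
  have fin: "finite BF" using BF by (simp add: is_basis_def)
  have "finite_ext A (compositum A B)"
    using finite_ext_if_spanning[OF As(1) compositum_subfield compositum_upper(1) fin sub] by simp
  then show ?thesis using ext_degree_tower[OF A] by blast
qed

end

context perfect_ambient
begin

lemma galois_refl: "galois K K"
proof -
  have "normal K K" unfolding normal_def
  proof (intro allI impI subsetI)
    fix \<tau> y assume t: "embedding K K \<tau>" and y: "y \<in> \<tau> ` K"
    then obtain x where "x \<in> K" "y = \<tau> x" by blast
    then show "y \<in> K" using embedding.emb_fix[OF t] by simp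
  qed
  then show ?thesis using galois_iff_normal ext_degree_refl[OF K] by blast
qed

lemma galois_Int:
  assumes A: "galois K A" and B: "galois K B"
  shows "galois K (A \<inter> B)"
proof -
  have fA: "finite_ext K A" and nA: "normal K A" using A galois_iff_normal by auto
  have fB: "finite_ext K B" and nB: "normal K B" using B galois_iff_normal by auto
  have As: "is_subfield A" "K \<subseteq> A" using fA by (auto simp: finite_ext_def)
  have Bs: "is_subfield B" "K \<subseteq> B" using fB by (auto simp: finite_ext_def)
  have I: "is_subfield (A \<inter> B)" "K \<subseteq> A \<inter> B" using subfield_Int[OF As(1) Bs(1)] As Bs by auto
  have fI: "finite_ext K (A \<inter> B)" using finite_ext_intermediate[OF fA I] by auto
  have "normal K (A \<inter> B)" unfolding normal_def
  proof (intro allI impI)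
    fix \<tau> assume t: "embedding K (A \<inter> B) \<tau>"
    obtain \<tau>a where ta: "embedding K A \<tau>a" "\<forall>x\<in>A \<inter> B. \<tau>a x = \<tau> x" using emb_extend[OF I t fA] by blast
    obtain \<tau>b where tb: "embedding K B \<tau>b" "\<forall>x\<in>A \<inter> B. \<tau>b x = \<tau> x" using emb_extend[OF I t fB] by blast
    have "\<tau>a ` A \<subseteq> A" using nA ta(1) by (simp add: normal_def)
    moreover have "\<tau>b ` B \<subseteq> B" using nB tb(1) by (simp add: normal_def)
    ultimately show "\<tau> ` (A \<inter> B) \<subseteq> A \<inter> B" using ta(2) tb(2) by force
  qed
  then show ?thesis using galois_iff_normal fI by blast
qed

lemma galois_compositum:
  assumes A: "galois K A" and B: "galois K B"
  shows "galois K (compositum A B)"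
proof -
  have fA: "finite_ext K A" and nA: "normal K A" using A galois_iff_normal by auto
  have fB: "finite_ext K B" and nB: "normal K B" using B galois_iff_normal by auto
  have As: "is_subfield A" "K \<subseteq> A" using fA by (auto simp: finite_ext_def)
  have Bs: "is_subfield B" "K \<subseteq> B" using fB by (auto simp: finite_ext_def)
  let ?C = "compositum A B"
  have fC: "finite_ext K ?C" using finite_ext_compositum[OF fA fB] .
  have "normal K ?C" unfolding normal_def
  proof (intro allI impI)
    fix \<tau> assume t: "embedding K ?C \<tau>"
    have "\<tau> ` A \<subseteq> A" using nA embedding_subfield[OF t As compositum_upper(1)] by (simp add: normal_def)
    moreover have "\<tau> ` B \<subseteq> B" using nB embedding_subfield[OF t Bs compositum_upper(2)] by (simp add: normal_def)
    ultimately show "\<tau> ` ?C \<subseteq> ?C"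
      using compositum_upper[of A B] compositum_upper[of B A]
      by (intro embedding.image_compositum_subset[OF t order_refl compositum_subfield]) auto
  qed
  then show ?thesis using galois_iff_normal fC by blast
qed

section \<open>The maximal Galois subextension\<close>

lemma max_galois_sub_eqI:
  assumes H: "galois K H" "H \<subseteq> P" and all: "\<And>G. galois K G \<Longrightarrow> G \<subseteq> P \<Longrightarrow> G \<subseteq> H"
  shows "max_galois_sub K P = H"
  unfolding max_galois_sub_def
proof (rule the_equality)
  have fH: "finite_ext K H" using H(1) by (simp add: galois_def)
  show "galois K H \<and> H \<subseteq> P \<and> (\<forall>G. galois K G \<and> G \<subseteq> P \<longrightarrow> ext_degree K G \<le> ext_degree K H)"
  proof (intro conjI allI impI)
    fix G assume G: "galois K G \<and> G \<subseteq> P"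
    then have "G \<subseteq> H" using all by blast
    moreover have "is_subfield G" "K \<subseteq> G" using G by (auto simp: galois_def finite_ext_def)
    ultimately show "ext_degree K G \<le> ext_degree K H" using finite_ext_intermediate[OF fH] by blast
  qed (use H in auto)
next
  fix F assume F: "galois K F \<and> F \<subseteq> P \<and> (\<forall>G. galois K G \<and> G \<subseteq> P \<longrightarrow> ext_degree K G \<le> ext_degree K F)"
  have fH: "finite_ext K H" using H(1) by (simp add: galois_def)
  have FH: "F \<subseteq> H" using all F by blast
  have Fs: "is_subfield F" "K \<subseteq> F" using F by (auto simp: galois_def finite_ext_def)
  have "ext_degree K H \<le> ext_degree K F" using F H by blast
  moreover have "ext_degree K F \<le> ext_degree K H" using finite_ext_intermediate[OF fH Fs FH] by simp
  ultimately show "F = H" using intermediate_eq_if_ext_degree_eq[OF fH Fs FH] by simp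
qed

lemma greatest_galois_sub_exists:
  assumes P: "finite_ext K P"
  shows "\<exists>H. galois K H \<and> H \<subseteq> P \<and> (\<forall>G. galois K G \<and> G \<subseteq> P \<longrightarrow> G \<subseteq> H)"
proof -
  have Ps: "is_subfield P" "K \<subseteq> P" using P by (auto simp: finite_ext_def)
  define D where "D = {ext_degree K G | G. galois K G \<and> G \<subseteq> P}"
  have bnd: "d \<le> ext_degree K P" if dD: "d \<in> D" for d
  proof -
    obtain G where G: "d = ext_degree K G" "galois K G" "G \<subseteq> P" using dD by (auto simp: D_def)
    have "is_subfield G" "K \<subseteq> G" using G by (auto simp: galois_def finite_ext_def)
    then show ?thesis using finite_ext_intermediate[OF P _ _ G(3)] G(1) by simp
  qed
  have finD: "finite D" using bnd by (intro finite_subset[of D "{..ext_degree K P}"]) auto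
  have neD: "D \<noteq> {}" using galois_refl Ps(2) by (auto simp: D_def)
  have "Max D \<in> D" using Max_in[OF finD neD] .
  then obtain H where H: "Max D = ext_degree K H" "galois K H" "H \<subseteq> P" by (auto simp: D_def)
  have fH: "finite_ext K H" using H(2) by (simp add: galois_def)
  have Hs: "is_subfield H" "K \<subseteq> H" using fH by (auto simp: finite_ext_def)
  have "\<forall>G. galois K G \<and> G \<subseteq> P \<longrightarrow> G \<subseteq> H"
  proof (intro allI impI)
    fix G assume G: "galois K G \<and> G \<subseteq> P"
    let ?C = "compositum H G"
    have gC: "galois K ?C" using galois_compositum[OF H(2)] G by blast
    have fC: "finite_ext K ?C" using gC by (simp add: galois_def)
    have CP: "?C \<subseteq> P" using compositum_least[OF Ps(1) H(3)] G by blast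
    have "ext_degree K ?C \<in> D" using gC CP by (auto simp: D_def)
    then have "ext_degree K ?C \<le> ext_degree K H" using Max_ge[OF finD] H(1) by metis
    moreover have HC: "H \<subseteq> ?C" by (rule compositum_upper(1))
    moreover have "ext_degree K H \<le> ext_degree K ?C" using finite_ext_intermediate[OF fC Hs HC] by simp
    ultimately have "H = ?C" using intermediate_eq_if_ext_degree_eq[OF fC Hs HC] by simp
    then show "G \<subseteq> H" using compositum_upper(2)[of G H] by simp
  qed
  then show ?thesis using H by blast
qed

lemma max_galois_sub_greatest:
  assumes P: "finite_ext K P"
  shows "galois K (max_galois_sub K P) \<and> max_galois_sub K P \<subseteq> P \<and>
    (\<forall>G. galois K G \<and> G \<subseteq> P \<longrightarrow> G \<subseteq> max_galois_sub K P)"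
proof -
  obtain H where H: "galois K H" "H \<subseteq> P" "\<forall>G. galois K G \<and> G \<subseteq> P \<longrightarrow> G \<subseteq> H"
    using greatest_galois_sub_exists[OF P] by blast
  have "max_galois_sub K P = H" using max_galois_sub_eqI[OF H(1,2)] H(3) by blast
  then show ?thesis using H by simp
qed

section \<open>Linear disjointness\<close>

lemma lin_disjoint_basis_indep:
  assumes LD: "lin_disjoint K N F" and N: "finite_ext K N" and F: "finite_ext K F" and BF: "is_basis K F BF"
    and A: "A \<subseteq> N"
  shows "lin_indep_over A BF"
  unfolding lin_indep_over_def
proof (intro allI impI ballI)
  fix c f0 assume c: "(\<forall>f\<in>BF. c f \<in> A) \<and> (\<Sum>f\<in>BF. c f * f) = 0" and f0: "f0 \<in> BF"
  obtain BN where BN: "is_basis K N BN" using N unfolding finite_ext_def by blast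
  have fBN: "finite BN" "BN \<subseteq> N" "lin_indep_over K BN" "span_over K BN = N" using BN by (auto simp: is_basis_def)
  have fBF: "finite BF" "BF \<subseteq> F" "lin_indep_over K BF" "span_over K BF = F" using BF by (auto simp: is_basis_def)
  have Fs: "is_subfield F" "K \<subseteq> F" using F by (auto simp: finite_ext_def)
  have "\<forall>f\<in>BF. \<exists>k. (\<forall>b\<in>BN. k b \<in> K) \<and> c f = (\<Sum>b\<in>BN. k b * b)"
  proof
    fix f assume "f \<in> BF"
    then have "c f \<in> span_over K BN" using c A fBN(4) by auto
    then show "\<exists>k. (\<forall>b\<in>BN. k b \<in> K) \<and> c f = (\<Sum>b\<in>BN. k b * b)" using span_overE by metis
  qed
  then obtain k where k: "\<And>f b. f \<in> BF \<Longrightarrow> b \<in> BN \<Longrightarrow> k f b \<in> K"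
    "\<And>f. f \<in> BF \<Longrightarrow> c f = (\<Sum>b\<in>BN. k f b * b)" by metis
  have "(\<Sum>f\<in>BF. c f * f) = (\<Sum>f\<in>BF. (\<Sum>b\<in>BN. k f b * b) * f)" using k(2) by (intro sum.cong) auto
  also have "\<dots> = (\<Sum>f\<in>BF. \<Sum>b\<in>BN. (k f b * f) * b)"
    by (simp add: sum_distrib_right) (simp add: mult_ac)
  also have "\<dots> = (\<Sum>b\<in>BN. \<Sum>f\<in>BF. (k f b * f) * b)" by (rule sum.swap)
  also have "\<dots> = (\<Sum>b\<in>BN. (\<Sum>f\<in>BF. k f b * f) * b)" by (simp add: sum_distrib_right)
  finally have s0: "(\<Sum>b\<in>BN. (\<Sum>f\<in>BF. k f b * f) * b) = 0" using c by simp
  have BNF: "lin_indep_over F BN" using LD fBN unfolding lin_disjoint_def by blast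
  have inF: "\<And>b. b \<in> BN \<Longrightarrow> (\<Sum>f\<in>BF. k f b * f) \<in> F"
    using k(1) fBF(2) Fs by (auto intro!: subfield_sum[OF Fs(1)] subfield_mult[OF Fs(1)])
  have z: "\<And>b. b \<in> BN \<Longrightarrow> (\<Sum>f\<in>BF. k f b * f) = 0"
    using lin_indep_overD[OF BNF, of "\<lambda>b. \<Sum>f\<in>BF. k f b * f", OF inF s0] by blast
  have "\<And>b. b \<in> BN \<Longrightarrow> k f0 b = 0"
  proof -
    fix b assume b: "b \<in> BN"
    have "\<And>f. f \<in> BF \<Longrightarrow> k f b \<in> K" using k(1) b by blast
    from lin_indep_overD[OF fBF(3), of "\<lambda>f. k f b", OF this z[OF b] f0] show "k f0 b = 0" .
  qed
  then show "c f0 = 0" using k(2)[OF f0] by simp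
qed

lemma ext_degree_compositum_lin_disjoint:
  assumes LD: "lin_disjoint K N F" and N: "finite_ext K N" and F: "finite_ext K F"
    and A: "finite_ext K A" "A \<subseteq> N"
  shows "finite_ext K (compositum A F) \<and> ext_degree K (compositum A F) = ext_degree K A * ext_degree K F"
proof -
  obtain BF where BF: "is_basis K F BF" "ext_degree K F = card BF" using finite_ext_obtain_basis[OF F] by blast
  have As: "is_subfield A" "K \<subseteq> A" using A by (auto simp: finite_ext_def)
  have Fs: "is_subfield F" using F by (auto simp: finite_ext_def)
  have eq: "compositum A F = span_fam_over A id BF" using compositum_eq_span_basis[OF As BF(1) Fs] .
  have fBF: "finite BF" "BF \<subseteq> F" using BF by (auto simp: is_basis_def)
  have b: "is_basis A (compositum A F) BF" unfolding is_basis_def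
    using fBF compositum_upper(2)[of F A] lin_disjoint_basis_indep[OF LD N F BF(1) A(2)] eq by (auto simp: span_over_conv_fam)
  have AC: "finite_ext A (compositum A F)"
    using b As compositum_subfield compositum_upper(1)[of A F] unfolding finite_ext_def by blast
  have "ext_degree A (compositum A F) = card BF" using ext_degree_eq_card_basis[OF As(1) b] .
  then show ?thesis using ext_degree_tower[OF A(1) AC] BF(2) by simp
qed

text \<open>If no Galois extension of \<open>K\<close> contains \<open>L\<close>, then \<open>galois_closure K L\<close> is the empty
  intersection, that is the whole ambient field, and no \<open>F \<noteq> K\<close> is linearly disjoint from it:
  \<open>1\<close> and any \<open>f \<in> F - K\<close> are independent over \<open>K\<close> but not over \<open>F\<close>.\<close>

lemma exists_galois_overfield_if_lin_disjoint:
  assumes LD: "lin_disjoint K (galois_closure K L) F" and F: "finite_ext K F" and d: "ext_degree K F > 1"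
  shows "\<exists>N. galois K N \<and> L \<subseteq> N"
proof (rule ccontr)
  assume "\<not> (\<exists>N. galois K N \<and> L \<subseteq> N)"
  then have U: "galois_closure K L = UNIV" unfolding galois_closure_def by auto
  have Fs: "is_subfield F" "K \<subseteq> F" using F by (auto simp: finite_ext_def)
  have "F \<noteq> K" using d ext_degree_refl[OF K] by auto
  then obtain f where f: "f \<in> F" "f \<notin> K" using Fs by blast
  have f1: "f \<noteq> 1" using f subfield_1[OF K] by auto
  let ?S = "{1, f}"
  have indK: "lin_indep_over K ?S" unfolding lin_indep_over_def
  proof (intro allI impI ballI)
    fix c s assume c: "(\<forall>s\<in>?S. c s \<in> K) \<and> (\<Sum>s\<in>?S. c s * s) = 0" and s: "s \<in> ?S"
    have e: "c 1 + c f * f = 0" using c f1 by simp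
    have cf: "c f = 0"
    proof (rule ccontr)
      assume nz: "c f \<noteq> 0"
      have "f = - c 1 / c f" using e nz by (simp add: field_simps add_eq_0_iff)
      moreover have "- c 1 / c f \<in> K" using c by (intro subfield_divide[OF K] subfield_uminus[OF K]) auto
      ultimately have "f \<in> K" by simp
      then show False using f by simp
    qed
    then have "c 1 = 0" using e by simp
    then show "c s = 0" using s cf by auto
  qed
  have LI: "lin_indep_over F ?S" using LD U indK unfolding lin_disjoint_def by auto
  have s0: "(\<Sum>s\<in>?S. (\<lambda>s. if s = 1 then f else -1) s * s) = 0" using f1 by simp
  have mem: "\<And>s. s \<in> ?S \<Longrightarrow> (\<lambda>s. if s = 1 then f else -1) s \<in> F"
    using f(1) subfield_uminus[OF Fs(1) subfield_1[OF Fs(1)]] by auto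
  have "(\<lambda>s. if s = 1 then f else -1) f = 0" using lin_indep_overD[OF LI mem s0, of f] by simp
  then show False using f1 by simp
qed

lemma galois_closure_galois:
  assumes L: "finite_ext K L" and N0: "galois K N0" "L \<subseteq> N0"
  shows "galois K (galois_closure K L) \<and> L \<subseteq> galois_closure K L"
proof -
  define P where "P = (\<lambda>G. galois K G \<and> L \<subseteq> G \<and> G \<subseteq> N0)"
  have "P N0" using N0 by (simp add: P_def)
  then obtain Lt where Lt: "P Lt" and lmin: "\<And>G. P G \<Longrightarrow> ext_degree K Lt \<le> ext_degree K G"
    using ex_has_least_nat[of P N0 "ext_degree K"] by blast
  have gLt: "galois K Lt" and LLt: "L \<subseteq> Lt" and LtN0: "Lt \<subseteq> N0" using Lt by (auto simp: P_def)
  have fLt: "finite_ext K Lt" using gLt by (simp add: galois_def)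
  have sub: "Lt \<subseteq> G'" if G': "galois K G'" "L \<subseteq> G'" for G'
  proof -
    have gI: "galois K (Lt \<inter> G')" using galois_Int[OF gLt G'(1)] .
    have "P (Lt \<inter> G')" using gI LLt G'(2) LtN0 by (auto simp: P_def)
    then have le: "ext_degree K Lt \<le> ext_degree K (Lt \<inter> G')" by (rule lmin)
    have Is: "is_subfield (Lt \<inter> G')" "K \<subseteq> Lt \<inter> G'" using gI by (auto simp: galois_def finite_ext_def)
    have "ext_degree K (Lt \<inter> G') \<le> ext_degree K Lt" using finite_ext_intermediate[OF fLt Is] by auto
    then have "Lt \<inter> G' = Lt" using intermediate_eq_if_ext_degree_eq[OF fLt Is] le by auto
    then show ?thesis by blast
  qed
  have "galois_closure K L = Lt" unfolding galois_closure_def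
  proof
    show "\<Inter> {F. galois K F \<and> L \<subseteq> F} \<subseteq> Lt" using gLt LLt by blast
    show "Lt \<subseteq> \<Inter> {F. galois K F \<and> L \<subseteq> F}" using sub by blast
  qed
  then show ?thesis using gLt LLt by simp
qed

section \<open>Galois subextensions of a linearly disjoint compositum\<close>

lemma inj_on_restrict_K_auts_compositum:
  assumes fC: "finite_ext K (compositum A B)"
  shows "inj_on (\<lambda>\<sigma>. (id_outside \<sigma> A, id_outside \<sigma> B)) (K_auts K (compositum A B))"
proof (rule inj_onI)
  fix \<sigma> \<sigma>' assume s: "\<sigma> \<in> K_auts K (compositum A B)" "\<sigma>' \<in> K_auts K (compositum A B)"
    and eq: "(id_outside \<sigma> A, id_outside \<sigma> B) = (id_outside \<sigma>' A, id_outside \<sigma>' B)"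
  have "\<forall>x\<in>A. \<sigma> x = \<sigma>' x" "\<forall>x\<in>B. \<sigma> x = \<sigma>' x"
    using eq by (metis id_outside_apply prod.inject)+
  then have "\<forall>x\<in>compositum A B. \<sigma> x = \<sigma>' x"
    using K_autsD(1)[OF fC s(1)] K_autsD(1)[OF fC s(2)] by (intro embedding.eq_on_compositum) auto
  moreover have "\<sigma> x = \<sigma>' x" if "x \<notin> compositum A B" for x
    using K_autsD(3)[OF fC s(1) that] K_autsD(3)[OF fC s(2) that] by simp
  ultimately show "\<sigma> = \<sigma>'" by blast
qed

text \<open>Since \<open>[NF:K] = [N:K] [F:K]\<close>, counting shows that restriction
  \<open>Aut(NF/K) \<rightarrow> Aut(N/K) \<times> Aut(F/K)\<close> is bijective.\<close>

lemma lift_K_aut_compositum: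
  assumes gN: "galois K N" and gF: "galois K F" and LD: "lin_disjoint K N F"
    and t: "\<tau> \<in> K_auts K N"
  obtains \<sigma> where "embedding K (compositum N F) \<sigma>" "\<forall>x\<in>N. \<sigma> x = \<tau> x" "\<forall>f\<in>F. \<sigma> f = f"
proof -
  let ?C = "compositum N F"
  define r where "r = (\<lambda>\<sigma>. (id_outside \<sigma> N, id_outside \<sigma> F))"
  have fN: "finite_ext K N" and fF: "finite_ext K F" using gN gF by (simp_all add: galois_def)
  have gC: "galois K ?C" using galois_compositum[OF gN gF] .
  have fC: "finite_ext K ?C" using gC by (simp add: galois_def)
  have Ns: "is_subfield N" "K \<subseteq> N" "N \<subseteq> ?C" using fN compositum_upper(1)[of N F] by (auto simp: finite_ext_def)
  have Fs: "is_subfield F" "K \<subseteq> F" "F \<subseteq> ?C" using fF compositum_upper(2)[of F N] by (auto simp: finite_ext_def)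
  have into: "r ` K_auts K ?C \<subseteq> K_auts K N \<times> K_auts K F"
  proof
    fix p assume "p \<in> r ` K_auts K ?C"
    then obtain \<sigma> where s: "\<sigma> \<in> K_auts K ?C" "p = r \<sigma>" by blast
    have e: "embedding K ?C \<sigma>" using K_autsD(1)[OF fC s(1)] .
    show "p \<in> K_auts K N \<times> K_auts K F"
      using normal_id_outside_in_K_auts[OF fN _ embedding_subfield[OF e Ns]]
        normal_id_outside_in_K_auts[OF fF _ embedding_subfield[OF e Fs]] gN gF s(2)
      by (simp add: r_def galois_iff_normal)
  qed
  have "card (r ` K_auts K ?C) = ext_degree K ?C"
    using card_image[OF inj_on_restrict_K_auts_compositum[OF fC]] gC by (simp add: r_def galois_def)
  also have "\<dots> = ext_degree K N * ext_degree K F"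
    using ext_degree_compositum_lin_disjoint[OF LD fN fF fN order_refl] by simp
  also have "\<dots> = card (K_auts K N \<times> K_auts K F)"
    using gN gF by (simp add: galois_def card_cartesian_product)
  finally have "r ` K_auts K ?C = K_auts K N \<times> K_auts K F"
    using card_subset_eq[OF _ into] card_K_auts_le[OF fN] card_K_auts_le[OF fF] by simp
  moreover have "id \<in> K_auts K F" using id_in_K_auts[OF K Fs(1,2)] .
  ultimately have "(\<tau>, id) \<in> r ` K_auts K ?C" using t by simp
  then obtain \<sigma> where s: "\<sigma> \<in> K_auts K ?C" "id_outside \<sigma> N = \<tau>" "id_outside \<sigma> F = id"
    by (auto simp: r_def)
  have "\<forall>x\<in>N. \<sigma> x = \<tau> x" "\<forall>f\<in>F. \<sigma> f = f"
    using s(2,3) by (metis id_outside_apply id_apply)+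
  then show thesis using that K_autsD(1)[OF fC s(1)] by blast
qed

lemma galois_aut_stable_part:
  assumes gN: "galois K N" and fL: "finite_ext K L" and LN: "L \<subseteq> N"
  shows "galois K (aut_stable_part K N L)"
proof -
  define L' where "L' = aut_stable_part K N L"
  have fN: "finite_ext K N" using gN by (simp add: galois_def)
  have Ls: "is_subfield L" "K \<subseteq> L" using fL by (auto simp: finite_ext_def)
  have H: "\<And>\<tau>. \<tau> \<in> K_auts K N \<Longrightarrow> embedding K N \<tau>" by (rule K_autsD(1)[OF fN])
  have "L' = L \<inter> (\<Inter>\<tau>\<in>K_auts K N. {x \<in> N. \<tau> x \<in> L})"
    using LN by (auto simp: L'_def aut_stable_part_def)
  also have "is_subfield \<dots>"
    using embedding.subfield_preimage[OF H Ls(1)] by (intro subfield_Int_INT[OF Ls(1)])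
  finally have sf: "is_subfield L'" .
  have KL': "K \<subseteq> L'" using Ls(2) by (auto simp: L'_def aut_stable_part_def embedding.emb_fix[OF H])
  have L'L: "L' \<subseteq> L" by (auto simp: L'_def aut_stable_part_def)
  have fL': "finite_ext K L'" using finite_ext_intermediate[OF fL sf KL' L'L] by simp
  have nN: "normal K N" using gN galois_iff_normal by auto
  have "normal K L'" unfolding normal_def
  proof (intro allI impI subsetI)
    fix \<rho> z assume r: "embedding K L' \<rho>" and z: "z \<in> \<rho> ` L'"
    then obtain y where y: "y \<in> L'" "z = \<rho> y" by blast
    obtain \<rho>' where r': "embedding K N \<rho>'" "\<forall>x\<in>L'. \<rho>' x = \<rho> x" using emb_extend[OF sf KL' r fN] by blast
    have r'': "id_outside \<rho>' N \<in> K_auts K N" by (rule normal_id_outside_in_K_auts[OF fN nN r'(1)])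
    have zeq: "z = id_outside \<rho>' N y" using y r'(2) L'L LN by (auto simp: id_outside_def)
    have "z \<in> L" using zeq r'' y(1) by (simp add: L'_def aut_stable_part_def)
    moreover have "\<tau> z \<in> L" if t: "\<tau> \<in> K_auts K N" for \<tau>
    proof -
      have "(\<tau> \<circ> id_outside \<rho>' N) y \<in> L"
        using comp_in_K_auts[OF t r''] y(1) unfolding L'_def aut_stable_part_def by blast
      then show ?thesis using zeq by simp
    qed
    ultimately show "z \<in> L'" by (simp add: L'_def aut_stable_part_def)
  qed
  then show ?thesis using galois_iff_normal fL' by (simp add: L'_def)
qed

lemma coeff_in_aut_stable_part:
  assumes gN: "galois K N" and gF: "galois K F" and LD: "lin_disjoint K N F"
    and fL: "finite_ext K L" and LN: "L \<subseteq> N" and BF: "is_basis K F BF"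
    and gG: "galois K G" and GM: "G \<subseteq> compositum L F"
    and c: "\<And>f. f \<in> BF \<Longrightarrow> c f \<in> L" and x: "(\<Sum>f\<in>BF. c f * f) \<in> G" and f: "f \<in> BF"
  shows "c f \<in> aut_stable_part K N L"
  unfolding aut_stable_part_def
proof (intro CollectI conjI ballI)
  let ?C = "compositum N F" and ?x = "\<Sum>f\<in>BF. c f * f"
  show "c f \<in> L" using c f .
  fix \<tau> assume t: "\<tau> \<in> K_auts K N"
  obtain \<sigma> where s: "embedding K ?C \<sigma>" "\<forall>x\<in>N. \<sigma> x = \<tau> x" "\<forall>f\<in>F. \<sigma> f = f"
    using lift_K_aut_compositum[OF gN gF LD t] by blast
  interpret s: embedding K ?C \<sigma> by (rule s(1))
  have fN: "finite_ext K N" and fF: "finite_ext K F" using gN gF by (simp_all add: galois_def)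
  have Ls: "is_subfield L" "K \<subseteq> L" and Ns: "is_subfield N" and Fs: "is_subfield F"
    using fL fN fF by (auto simp: finite_ext_def)
  have fBF: "finite BF" "BF \<subseteq> F" using BF by (auto simp: is_basis_def)
  have M: "compositum L F = span_over L BF"
    using compositum_eq_span_basis[OF Ls BF Fs] by (simp add: span_over_conv_fam)
  have MC: "compositum L F \<subseteq> ?C" using LN by (intro compositum_mono) auto
  have NC: "N \<subseteq> ?C" and FC: "F \<subseteq> ?C" using compositum_upper by blast+
  have Gs: "is_subfield G" "K \<subseteq> G" using gG by (auto simp: galois_def finite_ext_def)
  have "\<sigma> ?x \<in> G"
    using galois_imp_normal[OF gG] embedding_subfield[OF s(1) Gs] GM MC x by (auto simp: normal_def)
  then have "\<sigma> ?x \<in> span_over L BF" using GM M by blast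
  then obtain c' where c': "\<And>f. f \<in> BF \<Longrightarrow> c' f \<in> L" "\<sigma> ?x = (\<Sum>f\<in>BF. c' f * f)"
    by (elim span_overE) blast
  have "\<sigma> ?x = (\<Sum>f\<in>BF. \<sigma> (c f * f))"
    using c fBF(2) LN NC FC by (intro s.emb_sum subfield_mult[OF compositum_subfield]) auto
  also have "\<dots> = (\<Sum>f\<in>BF. \<tau> (c f) * f)"
  proof (rule sum.cong)
    fix f assume "f \<in> BF"
    then have "c f \<in> N" "f \<in> F" using c fBF(2) LN by auto
    then show "\<sigma> (c f * f) = \<tau> (c f) * f" using s(2,3) s.emb_mult[of "c f" f] NC FC by auto
  qed simp
  finally have sum0: "(\<Sum>f\<in>BF. (\<tau> (c f) - c' f) * f) = 0"
    using c'(2) by (simp add: left_diff_distrib sum_subtractf)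
  have diff_N: "\<tau> (c f) - c' f \<in> N" if "f \<in> BF" for f
  proof -
    have "c f \<in> N" "c' f \<in> N" using c c'(1) LN that by auto
    have "\<tau> (c f) \<in> \<tau> ` N" using \<open>c f \<in> N\<close> by (rule imageI)
    then have "\<tau> (c f) \<in> N" unfolding K_autsD(2)[OF fN t] .
    then show ?thesis using \<open>c' f \<in> N\<close> by (rule subfield_diff[OF Ns])
  qed
  have "\<tau> (c f) - c' f = 0"
    using lin_indep_overD[OF lin_disjoint_basis_indep[OF LD fN fF BF order_refl],
        where c="\<lambda>f. \<tau> (c f) - c' f", OF diff_N sum0 f] .
  then show "\<tau> (c f) \<in> L" using c'(1)[OF f] by simp
qed

lemma max_galois_sub_compositum:
  assumes gN: "galois K N" and gF: "galois K F" and LD: "lin_disjoint K N F"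
    and fL: "finite_ext K L" and LN: "L \<subseteq> N"
  shows "max_galois_sub K (compositum L F) = compositum (max_galois_sub K L) F"
proof (rule max_galois_sub_eqI)
  let ?FL = "max_galois_sub K L"
  have FL: "galois K ?FL" "?FL \<subseteq> L" "\<And>G. galois K G \<Longrightarrow> G \<subseteq> L \<Longrightarrow> G \<subseteq> ?FL"
    using max_galois_sub_greatest[OF fL] by auto
  show "galois K (compositum ?FL F)" using galois_compositum[OF FL(1) gF] .
  show "compositum ?FL F \<subseteq> compositum L F" using FL(2) by (intro compositum_mono) auto
  fix G assume gG: "galois K G" and GM: "G \<subseteq> compositum L F"
  have fF: "finite_ext K F" using gF by (simp add: galois_def)
  obtain BF where BF: "is_basis K F BF" using fF unfolding finite_ext_def by blast
  have Fs: "is_subfield F" and Ls: "is_subfield L" "K \<subseteq> L" and FLs: "is_subfield ?FL" "K \<subseteq> ?FL"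
    using fF fL FL(1) by (auto simp: finite_ext_def galois_def)
  have stable: "aut_stable_part K N L \<subseteq> ?FL"
    using FL(3) galois_aut_stable_part[OF gN fL LN] by (auto simp: aut_stable_part_def)
  show "G \<subseteq> compositum ?FL F"
  proof
    fix x assume "x \<in> G"
    moreover obtain c where c: "\<And>f. f \<in> BF \<Longrightarrow> c f \<in> L" "x = (\<Sum>f\<in>BF. c f * f)"
      using GM \<open>x \<in> G\<close> compositum_eq_span_basis[OF Ls BF Fs]
      by (auto simp flip: span_over_conv_fam elim!: span_overE)
    ultimately have "\<And>f. f \<in> BF \<Longrightarrow> c f \<in> ?FL"
      using coeff_in_aut_stable_part[OF gN gF LD fL LN BF gG GM] stable by blast
    then show "x \<in> compositum ?FL F"
      using c compositum_eq_span_basis[OF FLs BF Fs] by (auto simp flip: span_over_conv_fam intro!: span_overI)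
  qed
qed

lemma asc_compositum_lin_disjoint:
  assumes gN: "galois K N" and gF: "galois K F" and LD: "lin_disjoint K N F"
    and fL: "finite_ext K L" and LN: "L \<subseteq> N"
  shows "asc_t K (compositum L F) = ext_degree K F * asc_t K L"
    and "asc_u K (compositum L F) = asc_u K L"
proof -
  let ?FL = "max_galois_sub K L" and ?M = "compositum L F"
  have FL: "finite_ext K ?FL" "?FL \<subseteq> L"
    using max_galois_sub_greatest[OF fL] by (auto simp: galois_def)
  have fN: "finite_ext K N" and fF: "finite_ext K F" using gN gF by (simp_all add: galois_def)
  have mgs: "max_galois_sub K ?M = compositum ?FL F"
    using max_galois_sub_compositum[OF gN gF LD fL LN] .
  have FM: "finite_ext K (compositum ?FL F)"
    and degFM: "ext_degree K (compositum ?FL F) = ext_degree K ?FL * ext_degree K F"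
    using ext_degree_compositum_lin_disjoint[OF LD fN fF FL(1)] FL(2) LN by auto
  have M: "finite_ext K ?M" and degM: "ext_degree K ?M = ext_degree K L * ext_degree K F"
    using ext_degree_compositum_lin_disjoint[OF LD fN fF fL LN] by auto
  show "asc_t K ?M = ext_degree K F * asc_t K L" unfolding asc_t_def mgs degFM by simp
  have sub: "is_subfield (compositum ?FL F)" "K \<subseteq> compositum ?FL F" "compositum ?FL F \<subseteq> ?M"
    using FM FL(2) compositum_mono[of ?FL L F F] by (auto simp: finite_ext_def)
  have FLs: "is_subfield ?FL" "K \<subseteq> ?FL" using FL(1) by (auto simp: finite_ext_def)
  have "ext_degree K ?FL * ext_degree K F * ext_degree (compositum ?FL F) ?M = ext_degree K ?M"
    using ext_degree_tower[OF FM finite_ext_upper[OF M sub]] degFM by simp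
  also have "\<dots> = ext_degree K ?FL * ext_degree K F * ext_degree ?FL L"
    using ext_degree_tower[OF FL(1) finite_ext_upper[OF fL FLs FL(2)]] degM by simp
  finally have "ext_degree K ?FL * ext_degree K F * ext_degree (compositum ?FL F) ?M
      = ext_degree K ?FL * ext_degree K F * ext_degree ?FL L" .
  then have "ext_degree (compositum ?FL F) ?M = ext_degree ?FL L"
    using ext_degree_pos[OF FL(1)] ext_degree_pos[OF fF] by simp
  then show "asc_u K ?M = asc_u K L" unfolding asc_u_def mgs .
qed

end

theorem theorem9p4:
  fixes K L M :: "'a::field set" and d :: nat
  assumes "is_alg_closure_of K"
    and "perfect_field K"
    and "strong_cluster_magnification K L M d"
  shows "asc_t K M = d * asc_t K L \<and> asc_u K M = asc_u K L"
proof -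
  interpret perfect_ambient K using assms(1,2) by unfold_locales
  obtain F where fL: "finite_ext K L" and gF: "galois K F"
    and LD: "lin_disjoint K (galois_closure K L) F" and M: "M = compositum L F" and d: "d = ext_degree K F"
    using assms(3) unfolding strong_cluster_magnification_def by blast
  have fF: "finite_ext K F" using gF by (simp add: galois_def)
  show ?thesis
  proof (cases "d = 1")
    case True
    then have "M = L"
      using eq_if_ext_degree_1[OF fF] d M compositum_least[of L L K] compositum_upper(1)[of L K] fL
      by (auto simp: finite_ext_def)
    then show ?thesis using True by simp
  next
    case False
    then have "ext_degree K F > 1" using ext_degree_pos[OF fF] d by simp
    then obtain N0 where "galois K N0" "L \<subseteq> N0" using exists_galois_overfield_if_lin_disjoint[OF LD fF] by blast
    then have "galois K (galois_closure K L)" "L \<subseteq> galois_closure K L"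
      using galois_closure_galois[OF fL] by auto
    then show ?thesis using asc_compositum_lin_disjoint[OF _ gF LD fL] M d by simp
  qed
qed

end
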